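(* Let $\epsilon\in\,]0,1[$. Let $\widetilde{X}:\lambda\to\square^{op}\mathbf{Set}$ be a transfinite tower (i.e. a colimit-preserving tower indexed by an ordinal $\lambda$) of precubical sets such that each map $\widetilde{X}_\nu\to \widetilde{X}_{\nu+1}$ is a pushout of the map of precubical sets $\partial\square[n_\nu]\subset \square[n_\nu]$ for some $n_\nu\geqslant 0$. Let $\nu$ be a limit ordinal with $\nu\leqslant \lambda$. Then the canonical continuous map \[ \Phi_\nu:\varinjlim_{\mu<\nu} \mathcal{P}^-(\widetilde{X}_\mu,\epsilon) \longrightarrow \mathcal{P}^-(\widetilde{X}_\nu,\epsilon) \] is a homeomorphism.
   Context: ${\mathbf{Top}}$ denotes the category of $\Delta$-generated spaces, with internal hom $\mathbf{TOP}(-,-)$. $\square^{op}\mathbf{Set}$ is the category of precubical sets, $\square[n]$ the $n$-cube and $\partial\square[n]$ its boundary (cubes of dimension $\leqslant n-1$). For a precubical set $K$, $|K|_{geom}$ is its geometric realization and each $n$-cube $c$ induces $|c|_{geom}:[0,1]^n\to|K|_{geom}$. The initial vertex of an $n$-cube $c$ is $c^-=\partial_1^0\cdots\partial_n^0c$, and $\mathcal{C}^-_\alpha(K)=\{c\in K\mid\dim(c)\geqslant1,\ c^-=\alpha\}$. For $n\geqslant1$, $N_n(\epsilon)$ is the set of natural directed paths $\phi:[0,\epsilon]\to[0,1]^n$ (non-decreasing in each coordinate, sum of coordinates equal to $t$ at time $t$), with the $\Delta$-kelleyfication of the relative topology from $\mathbf{TOP}([0,\epsilon],[0,1]^n)$.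 The homotopy branching space is $\mathcal{P}^-(K,\epsilon)=\coprod_{\alpha\in K_0}\mathcal{P}^-_\alpha(K,\epsilon)$ where $\mathcal{P}^-_\alpha(K,\epsilon)=\{|c|_{geom}\phi\mid c\in\mathcal{C}^-_\alpha(K),\ \phi\in N_{\dim(c)}(\epsilon)\}$ has the $\Delta$-kelleyfication of the relative topology from $\mathbf{TOP}([0,\epsilon],|K|_{geom})$. *)

theory Defs
  imports "HOL-Analysis.Analysis" "HOL-Homology.Homology"
begin

text \<open>A precubical set is given by a set of cells X, a dimension function and face
  maps d i a (1 <= i <= dm c, a in {False = 0, True = 1}), satisfying the cubical
  identities d i a (d j b c) = d (j-1) b (d i a c) for i < j.\<close>

definition precubical :: "'c set \<Rightarrow> ('c \<Rightarrow> nat) \<Rightarrow> (nat \<Rightarrow> bool \<Rightarrow> 'c \<Rightarrow> 'c) \<Rightarrow> bool" where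
  "precubical X dm d \<longleftrightarrow>
     (\<forall>c\<in>X. \<forall>i a. 1 \<le> i \<and> i \<le> dm c \<longrightarrow> d i a c \<in> X \<and> dm (d i a c) = dm c - 1) \<and>
     (\<forall>c\<in>X. \<forall>i j a b. 1 \<le> i \<and> i < j \<and> j \<le> dm c \<longrightarrow>
         d i a (d j b c) = d (j - 1) b (d i a c))"

fun lowf :: "(nat \<Rightarrow> bool \<Rightarrow> 'c \<Rightarrow> 'c) \<Rightarrow> nat \<Rightarrow> 'c \<Rightarrow> 'c" where
  "lowf d 0 c = c"
| "lowf d (Suc k) c = lowf d k (d (Suc k) False c)"

definition init_vertex :: "('c \<Rightarrow> nat) \<Rightarrow> (nat \<Rightarrow> bool \<Rightarrow> 'c \<Rightarrow> 'c) \<Rightarrow> 'c \<Rightarrow> 'c" where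
  "init_vertex dm d c = lowf d (dm c) c"

definition cells_from :: "'c set \<Rightarrow> ('c \<Rightarrow> nat) \<Rightarrow> (nat \<Rightarrow> bool \<Rightarrow> 'c \<Rightarrow> 'c) \<Rightarrow> 'c \<Rightarrow> 'c set" where
  "cells_from X dm d \<alpha> = {c \<in> X. 1 \<le> dm c \<and> init_vertex dm d c = \<alpha>}"

text \<open>[0,1]^n as functions nat => real with coordinates 1..n, zero elsewhere.\<close>
definition cube :: "nat \<Rightarrow> (nat \<Rightarrow> real) set" where
  "cube n = {x. (\<forall>i. 1 \<le> i \<and> i \<le> n \<longrightarrow> 0 \<le> x i \<and> x i \<le> 1) \<and> (\<forall>i. (i = 0 \<or> n < i) \<longrightarrow> x i = 0)}"

definition cube_top :: "nat \<Rightarrow> (nat \<Rightarrow> real) topology" where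
  "cube_top n = subtopology (powertop_real UNIV) (cube n)"

definition coface :: "nat \<Rightarrow> bool \<Rightarrow> (nat \<Rightarrow> real) \<Rightarrow> (nat \<Rightarrow> real)" where
  "coface i a x = (\<lambda>j. if j < i then x j else if j = i then (if a then 1 else 0) else x (j - 1))"

definition glue :: "'c set \<Rightarrow> ('c \<Rightarrow> nat) \<Rightarrow> (nat \<Rightarrow> bool \<Rightarrow> 'c \<Rightarrow> 'c)
    \<Rightarrow> ('c \<times> (nat \<Rightarrow> real)) \<Rightarrow> ('c \<times> (nat \<Rightarrow> real)) \<Rightarrow> bool" where
  "glue K dm d p q \<longleftrightarrow> (\<exists>c i a x. c \<in> K \<and> 1 \<le> i \<and> i \<le> dm c \<and> x \<in> cube (dm c - 1) \<and>
       p = (d i a c, x) \<and> q = (c, coface i a x))"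

definition geo_pt :: "'c set \<Rightarrow> ('c \<Rightarrow> nat) \<Rightarrow> (nat \<Rightarrow> bool \<Rightarrow> 'c \<Rightarrow> 'c)
    \<Rightarrow> 'c \<Rightarrow> (nat \<Rightarrow> real) \<Rightarrow> ('c \<times> (nat \<Rightarrow> real)) set" where
  "geo_pt K dm d c x = {q. equivclp (glue K dm d) (c, x) q}"

definition realization :: "'c set \<Rightarrow> 'c set \<Rightarrow> ('c \<Rightarrow> nat) \<Rightarrow> (nat \<Rightarrow> bool \<Rightarrow> 'c \<Rightarrow> 'c)
    \<Rightarrow> ('c \<times> (nat \<Rightarrow> real)) set topology" where
  "realization K X dm d = topology (\<lambda>U.
      U \<subseteq> {geo_pt K dm d c x | c x. c \<in> X \<and> x \<in> cube (dm c)} \<and>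
      (\<forall>c\<in>X. openin (cube_top (dm c)) {x \<in> cube (dm c). geo_pt K dm d c x \<in> U}))"

definition simplex_top :: "nat \<Rightarrow> (nat \<Rightarrow> real) topology" where
  "simplex_top n = subtopology (powertop_real UNIV) (standard_simplex n)"

definition kdelta :: "'a topology \<Rightarrow> 'a topology" where
  "kdelta T = topology (\<lambda>U. U \<subseteq> topspace T \<and>
     (\<forall>n f. continuous_map (simplex_top n) T f \<longrightarrow>
        openin (simplex_top n) {x \<in> topspace (simplex_top n). f x \<in> U}))"

definition compact_open :: "'a topology \<Rightarrow> 'b topology \<Rightarrow> ('a \<Rightarrow> 'b) topology" where
  "compact_open X Y = topology_generated_by
     {{f. continuous_map X Y f \<and> f \<in> extensional (topspace X) \<and> f ` S \<subseteq> U} | S U.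
        compactin X S \<and> openin Y U}"

definition TOP :: "'a topology \<Rightarrow> 'b topology \<Rightarrow> ('a \<Rightarrow> 'b) topology" where
  "TOP X Y = kdelta (compact_open X Y)"

definition interval_top :: "real \<Rightarrow> real topology" where
  "interval_top \<epsilon> = subtopology euclideanreal {0..\<epsilon>}"

definition natural_paths :: "nat \<Rightarrow> real \<Rightarrow> (real \<Rightarrow> (nat \<Rightarrow> real)) set" where
  "natural_paths n \<epsilon> = {\<phi>. \<phi> \<in> extensional {0..\<epsilon>} \<and>
      continuous_map (interval_top \<epsilon>) (cube_top n) \<phi> \<and>
      (\<forall>s t i. 0 \<le> s \<and> s \<le> t \<and> t \<le> \<epsilon> \<longrightarrow> \<phi> s i \<le> \<phi> t i) \<and>
      (\<forall>t\<in>{0..\<epsilon>}. (\<Sum>i=1..n. \<phi> t i) = t)}"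

definition branch_set :: "'c set \<Rightarrow> 'c set \<Rightarrow> ('c \<Rightarrow> nat) \<Rightarrow> (nat \<Rightarrow> bool \<Rightarrow> 'c \<Rightarrow> 'c)
    \<Rightarrow> real \<Rightarrow> 'c \<Rightarrow> (real \<Rightarrow> ('c \<times> (nat \<Rightarrow> real)) set) set" where
  "branch_set K X dm d \<epsilon> \<alpha> =
     {restrict (\<lambda>t. geo_pt K dm d c (\<phi> t)) {0..\<epsilon>} | c \<phi>.
        c \<in> cells_from X dm d \<alpha> \<and> \<phi> \<in> natural_paths (dm c) \<epsilon>}"

definition branch_top :: "'c set \<Rightarrow> 'c set \<Rightarrow> ('c \<Rightarrow> nat) \<Rightarrow> (nat \<Rightarrow> bool \<Rightarrow> 'c \<Rightarrow> 'c)
    \<Rightarrow> real \<Rightarrow> 'c \<Rightarrow> (real \<Rightarrow> ('c \<times> (nat \<Rightarrow> real)) set) topology" where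
  "branch_top K X dm d \<epsilon> \<alpha> =
     kdelta (subtopology (TOP (interval_top \<epsilon>) (realization K X dm d)) (branch_set K X dm d \<epsilon> \<alpha>))"

text \<open>P^-(X, eps): coproduct over the vertices alpha of X (the summands are disjoint
  as sets, so the coproduct is realized on their union).\<close>
definition branching_space :: "'c set \<Rightarrow> 'c set \<Rightarrow> ('c \<Rightarrow> nat) \<Rightarrow> (nat \<Rightarrow> bool \<Rightarrow> 'c \<Rightarrow> 'c)
    \<Rightarrow> real \<Rightarrow> (real \<Rightarrow> ('c \<times> (nat \<Rightarrow> real)) set) topology" where
  "branching_space K X dm d \<epsilon> = topology (\<lambda>U.
     U \<subseteq> (\<Union>\<alpha>\<in>{v \<in> X. dm v = 0}. topspace (branch_top K X dm d \<epsilon> \<alpha>)) \<and>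
     (\<forall>\<alpha>\<in>{v \<in> X. dm v = 0}.
        openin (branch_top K X dm d \<epsilon> \<alpha>) (U \<inter> topspace (branch_top K X dm d \<epsilon> \<alpha>))))"

definition ord_less :: "'i rel \<Rightarrow> 'i \<Rightarrow> 'i \<Rightarrow> bool" where
  "ord_less r a b \<longleftrightarrow> (a, b) \<in> r \<and> a \<noteq> b"

definition is_limit :: "'i rel \<Rightarrow> 'i \<Rightarrow> bool" where
  "is_limit r \<nu> \<longleftrightarrow> (\<exists>\<mu>. ord_less r \<mu> \<nu>) \<and>
     (\<forall>\<mu>. ord_less r \<mu> \<nu> \<longrightarrow> (\<exists>\<xi>. ord_less r \<mu> \<xi> \<and> ord_less r \<xi> \<nu>))"

text \<open>Transfinite tower of sub-precubical sets (of a common ambient precubical structure)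
  indexed by the well-order r, in which each step is the attachment of exactly one new
  cube along its boundary (a pushout of the boundary inclusion), and which is
  colimit-preserving (union) at limit ordinals.\<close>
definition cell_tower :: "'i rel \<Rightarrow> ('i \<Rightarrow> 'c set) \<Rightarrow> ('c \<Rightarrow> nat) \<Rightarrow> (nat \<Rightarrow> bool \<Rightarrow> 'c \<Rightarrow> 'c) \<Rightarrow> bool" where
  "cell_tower r X dm d \<longleftrightarrow> Well_order r \<and>
     (\<forall>\<mu>\<in>Field r. precubical (X \<mu>) dm d) \<and>
     (\<forall>\<mu> \<nu>. \<mu> \<in> Field r \<and> \<nu> \<in> Field r \<and> ord_less r \<mu> \<nu> \<longrightarrow> X \<mu> \<subseteq> X \<nu>) \<and>
     (\<forall>\<mu> \<mu>'. \<mu> \<in> Field r \<and> \<mu>' \<in> Field r \<and> ord_less r \<mu> \<mu>' \<and>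
         \<not> (\<exists>\<xi>. ord_less r \<mu> \<xi> \<and> ord_less r \<xi> \<mu>') \<longrightarrow>
         (\<exists>c. c \<notin> X \<mu> \<and> X \<mu>' = insert c (X \<mu>))) \<and>
     (\<forall>\<nu>\<in>Field r. is_limit r \<nu> \<longrightarrow> X \<nu> = (\<Union>\<mu>\<in>{\<mu>. ord_less r \<mu> \<nu>}. X \<mu>))"

text \<open>Colimit (in Top, equivalently in Delta-generated spaces) of the chain of
  inclusions P^-(X mu, eps), mu < nu: union with the final topology.\<close>
definition colim_branching :: "'i rel \<Rightarrow> ('i \<Rightarrow> 'c set) \<Rightarrow> 'c set \<Rightarrow> ('c \<Rightarrow> nat)
    \<Rightarrow> (nat \<Rightarrow> bool \<Rightarrow> 'c \<Rightarrow> 'c) \<Rightarrow> real \<Rightarrow> 'i \<Rightarrow> (real \<Rightarrow> ('c \<times> (nat \<Rightarrow> real)) set) topology" where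
  "colim_branching r X K dm d \<epsilon> \<nu> = topology (\<lambda>U.
     U \<subseteq> (\<Union>\<mu>\<in>{\<mu>. ord_less r \<mu> \<nu>}. topspace (branching_space K (X \<mu>) dm d \<epsilon>)) \<and>
     (\<forall>\<mu>. ord_less r \<mu> \<nu> \<longrightarrow>
        openin (branching_space K (X \<mu>) dm d \<epsilon>) (U \<inter> topspace (branching_space K (X \<mu>) dm d \<epsilon>))))"

end

theory Submission
  imports Defs
begin

text \<open>
  Every point of a geometric realization has a unique representative (cell, interior point);
  its cell is the carrier of the point. A set of points with pairwise distinct carriers is
  closed together with all its subsets, so a compact set meets only finitely many carriers.

  Both spaces in the statement carry final topologies on the same set of paths. The
  inclusions \<open>P\<^sup>-(X \<mu>, \<epsilon>) \<rightarrow> P\<^sup>-(X \<nu>, \<epsilon>)\<close> are continuous because \<open>|X \<mu>|\<close> is a subspace of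
  \<open>|X \<nu>|\<close>: a closed subset of \<open>|X \<mu>|\<close> meets every new cube in a finite union of closed sets
  coming from its faces. Conversely, \<open>P\<^sup>-\<^sub>\<alpha>(X \<nu>, \<epsilon>)\<close> is \<open>\<Delta>\<close>-generated, and a map from a
  simplex into it has a compact set of endpoints, hence finitely many carriers, which already
  belong to some \<open>X \<mu>\<close> with \<open>\<mu> < \<nu>\<close>. Since \<open>\<epsilon> < 1\<close>, a natural path whose endpoint lies on
  a face of its cube runs entirely in that face, so every path lives in the carrier of its
  endpoint and the map factors continuously through \<open>P\<^sup>-\<^sub>\<alpha>(X \<mu>, \<epsilon>)\<close>.
\<close>

definition drop_coord :: "nat \<Rightarrow> (nat \<Rightarrow> real) \<Rightarrow> (nat \<Rightarrow> real)" where
  "drop_coord i x = (\<lambda>j. if j < i then x j else x (Suc j))"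

definition boundary_coord :: "nat \<Rightarrow> (nat \<Rightarrow> real) \<Rightarrow> nat \<Rightarrow> bool" where
  "boundary_coord n x j \<longleftrightarrow> 1 \<le> j \<and> j \<le> n \<and> (x j = 0 \<or> x j = 1)"

lemma topspace_cube_top [simp]: "topspace (cube_top n) = cube n"
  by (simp add: cube_top_def)

lemma coface_at [simp]: "coface i a x i = (if a then 1 else 0)"
  by (simp add: coface_def)

lemma drop_coord_coface [simp]: "drop_coord i (coface i a x) = x"
  by (auto simp: drop_coord_def coface_def)

lemma coface_drop_coord: "x i = (if a then 1 else 0) \<Longrightarrow> coface i a (drop_coord i x) = x"
  by (auto simp: drop_coord_def coface_def fun_eq_iff)

lemma coface_drop_coord_boundary:
  "boundary_coord n x j \<Longrightarrow> coface j (x j = 1) (drop_coord j x) = x"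
  by (rule coface_drop_coord) (auto simp: boundary_coord_def)

lemma drop_coord_coface_less: "j < i \<Longrightarrow> drop_coord j (coface i a x) = coface (i - 1) a (drop_coord j x)"
  by (auto simp: drop_coord_def coface_def fun_eq_iff)

lemma drop_coord_cube: "x \<in> cube n \<Longrightarrow> 1 \<le> i \<Longrightarrow> i \<le> n \<Longrightarrow> drop_coord i x \<in> cube (n - 1)"
  unfolding cube_def drop_coord_def by auto

lemma coface_cube:
  assumes "x \<in> cube (n - 1)" "1 \<le> i" "i \<le> n" shows "coface i a x \<in> cube n"
proof -
  have bounds: "0 \<le> x j" "x j \<le> 1" if "1 \<le> j" "j \<le> n - 1" for j
    using assms(1) that by (auto simp: cube_def)
  have zero: "x j = 0" if "j = 0 \<or> n - 1 < j" for j
    using assms(1) that by (auto simp: cube_def)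
  show ?thesis
    using assms(2,3) unfolding cube_def coface_def by (auto intro!: bounds zero)
qed

lemma sum_drop_coord:
  "1 \<le> j \<Longrightarrow> j \<le> Suc m \<Longrightarrow> (\<Sum>i=1..m. drop_coord j x i) + x j = (\<Sum>i=1..Suc m. x i)"
proof (induction m)
  case (Suc m)
  show ?case
  proof (cases "j \<le> Suc m")
    case True
    then show ?thesis using Suc by (simp add: drop_coord_def)
  next
    case False
    then have "j = Suc (Suc m)" using Suc.prems by simp
    then show ?thesis by (simp add: drop_coord_def)
  qed
qed simp

lemma continuous_map_cube_coordinate: "continuous_map (cube_top n) euclideanreal (\<lambda>x. x k)"
  unfolding cube_top_def
  by (rule continuous_map_from_subtopology, rule continuous_map_product_projection) simp

lemma continuous_map_cube_top:
  assumes "\<And>k. continuous_map (cube_top m) euclideanreal (\<lambda>x. g x k)" and "g \<in> cube m \<rightarrow> cube n"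
  shows "continuous_map (cube_top m) (cube_top n) g"
  unfolding cube_top_def continuous_map_in_subtopology
proof
  show "continuous_map (subtopology (powertop_real UNIV) (cube m)) (powertop_real UNIV) g"
    unfolding continuous_map_componentwise_UNIV
  proof
    fix k
    show "continuous_map (subtopology (powertop_real UNIV) (cube m)) euclideanreal (\<lambda>x. g x k)"
      using assms(1)[of k] by (simp only: cube_top_def)
  qed
  show "g \<in> topspace (subtopology (powertop_real UNIV) (cube m)) \<rightarrow> cube n"
    using assms(2) by simp
qed

lemma continuous_map_coface:
  assumes "1 \<le> i" "i \<le> n"
  shows "continuous_map (cube_top (n - 1)) (cube_top n) (coface i a)"
proof (rule continuous_map_cube_top)
  fix k
  have "(\<lambda>x. coface i a x k) = (if k < i then (\<lambda>x. x k) else if k = i then (\<lambda>x. if a then 1 else 0)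
      else (\<lambda>x. x (k - 1)))"
    by (auto simp: coface_def fun_eq_iff)
  then show "continuous_map (cube_top (n - 1)) euclideanreal (\<lambda>x. coface i a x k)"
    by (simp add: continuous_map_cube_coordinate)
qed (use coface_cube[OF _ assms] in blast)

lemma continuous_map_drop_coord:
  assumes "1 \<le> j" "j \<le> n"
  shows "continuous_map (cube_top n) (cube_top (n - 1)) (drop_coord j)"
proof (rule continuous_map_cube_top)
  fix k
  have "(\<lambda>x. drop_coord j x k) = (if k < j then (\<lambda>x. x k) else (\<lambda>x. x (Suc k)))"
    by (auto simp: drop_coord_def fun_eq_iff)
  then show "continuous_map (cube_top n) euclideanreal (\<lambda>x. drop_coord j x k)"
    by (simp add: continuous_map_cube_coordinate)
qed (use drop_coord_cube assms in blast)

lemma compact_space_cube_top: "compact_space (cube_top n)"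
proof -
  have "cube n = PiE UNIV (\<lambda>i. if 1 \<le> i \<and> i \<le> n then {0..1} else {0})"
    unfolding cube_def PiE_def Pi_def extensional_def by (auto simp: not_le)
  then have "compactin (powertop_real UNIV) (cube n)"
    by (auto simp: compactin_PiE)
  then show ?thesis unfolding cube_top_def by (rule compact_space_subtopology)
qed

lemma Hausdorff_space_cube_top: "Hausdorff_space (cube_top n)"
  unfolding cube_top_def
  by (rule Hausdorff_space_subtopology) (simp add: Hausdorff_space_product_topology)

lemma closedin_cube_top_finite: "finite S \<Longrightarrow> S \<subseteq> cube n \<Longrightarrow> closedin (cube_top n) S"
  using t1_space_closedin_finite[of "cube_top n"] Hausdorff_imp_t1_space[OF Hausdorff_space_cube_top]
  by simp

lemma closedin_coface_image:
  assumes "1 \<le> i" "i \<le> n" "closedin (cube_top (n - 1)) C"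
  shows "closedin (cube_top n) (coface i a ` C)"
proof -
  have "compactin (cube_top (n - 1)) C"
    by (rule closedin_compact_space[OF compact_space_cube_top assms(3)])
  then have "compactin (cube_top n) (coface i a ` C)"
    by (rule image_compactin[OF _ continuous_map_coface[OF assms(1,2)]])
  then show ?thesis by (rule compactin_imp_closedin[OF Hausdorff_space_cube_top])
qed

section \<open>Normal forms of points of a realization\<close>

text \<open>Pushing \<open>(c, x)\<close> onto the face of \<open>c\<close> cut out by the least boundary coordinate of \<open>x\<close>,
  until no boundary coordinate is left, yields the unique pair (cell, interior point) representing
  the point \<open>|c|(x)\<close> of the realization.\<close>
fun normal_rep :: "(nat \<Rightarrow> bool \<Rightarrow> 'c \<Rightarrow> 'c) \<Rightarrow> nat \<Rightarrow> 'c \<Rightarrow> (nat \<Rightarrow> real) \<Rightarrow> 'c \<times> (nat \<Rightarrow> real)" where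
  "normal_rep d 0 c x = (c, x)"
| "normal_rep d (Suc n) c x = (if \<exists>j. boundary_coord (Suc n) x j then
      (let j = (LEAST j. boundary_coord (Suc n) x j) in normal_rep d n (d j (x j = 1) c) (drop_coord j x))
    else (c, x))"

lemma normal_rep_Suc_least:
  assumes "boundary_coord (Suc n) x j" "\<And>k. k < j \<Longrightarrow> \<not> boundary_coord (Suc n) x k"
  shows "normal_rep d (Suc n) c x = normal_rep d n (d j (x j = 1) c) (drop_coord j x)"
proof -
  have "(LEAST j. boundary_coord (Suc n) x j) = j"
    by (rule Least_equality) (use assms not_less in auto)
  then show ?thesis using assms by (auto simp: Let_def)
qed

lemma normal_rep_interior: "(\<And>j. \<not> boundary_coord n x j) \<Longrightarrow> normal_rep d n c x = (c, x)"
  by (cases n) auto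

lemma normal_rep_SucE:
  obtains "\<And>j. \<not> boundary_coord (Suc n) x j" "normal_rep d (Suc n) c x = (c, x)"
  | j where "boundary_coord (Suc n) x j"
      "normal_rep d (Suc n) c x = normal_rep d n (d j (x j = 1) c) (drop_coord j x)"
proof (cases "\<exists>j. boundary_coord (Suc n) x j")
  case True
  define j where "j = (LEAST j. boundary_coord (Suc n) x j)"
  have "boundary_coord (Suc n) x j" unfolding j_def using True by (meson LeastI)
  moreover have "normal_rep d (Suc n) c x = normal_rep d n (d j (x j = 1) c) (drop_coord j x)"
    using True by (simp add: j_def Let_def)
  ultimately show ?thesis by (rule that(2))
next
  case False
  then show ?thesis by (intro that(1)) auto
qed

lemma precubical_face:
  assumes "precubical X dm d" "c \<in> X" "1 \<le> i" "i \<le> dm c"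
  shows "d i a c \<in> X" "dm (d i a c) = dm c - 1"
  using assms unfolding precubical_def by blast+

lemma precubical_face_face:
  assumes "precubical X dm d" "c \<in> X" "1 \<le> i" "i < j" "j \<le> dm c"
  shows "d i a (d j b c) = d (j - 1) b (d i a c)"
  using assms unfolding precubical_def by blast

text \<open>When the least boundary coordinate \<open>j\<close> of \<open>coface i a x\<close> is not \<open>i\<close>, both sides reduce
  along \<open>j\<close> first, and the cubical identity lets the induction hypothesis take over.\<close>
lemma normal_rep_coface:
  assumes K: "precubical K dm d"
  shows "c \<in> K \<Longrightarrow> dm c = Suc n \<Longrightarrow> 1 \<le> i \<Longrightarrow> i \<le> Suc n \<Longrightarrow>
     normal_rep d n (d i a c) x = normal_rep d (Suc n) c (coface i a x)"
proof (induction n arbitrary: c i x a)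
  case (0 c i x a)
  then have "i = 1" by auto
  then have "normal_rep d (Suc 0) c (coface i a x) = normal_rep d 0 (d i a c) x"
    by (subst normal_rep_Suc_least[of _ _ i]) (auto simp: boundary_coord_def)
  then show ?case by simp
next
  case (Suc m c i x a)
  define x' where "x' = coface i a x"
  have Pi: "boundary_coord (Suc (Suc m)) x' i"
    using Suc.prems by (auto simp: boundary_coord_def x'_def)
  define j where "j = (LEAST j. boundary_coord (Suc (Suc m)) x' j)"
  have Pj: "boundary_coord (Suc (Suc m)) x' j" unfolding j_def by (rule LeastI, rule Pi)
  have below_j: "\<And>k. k < j \<Longrightarrow> \<not> boundary_coord (Suc (Suc m)) x' k"
    unfolding j_def by (rule not_less_Least)
  have "j \<le> i" unfolding j_def by (rule Least_le, rule Pi)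
  have rhs: "normal_rep d (Suc (Suc m)) c x' = normal_rep d (Suc m) (d j (x' j = 1) c) (drop_coord j x')"
    by (rule normal_rep_Suc_least[OF Pj below_j])
  show ?case
  proof (cases "j = i")
    case True
    then show ?thesis using rhs by (simp add: x'_def del: normal_rep.simps)
  next
    case False
    with \<open>j \<le> i\<close> have lt: "j < i" by simp
    have x'_below: "x' k = x k" if "k < i" for k using that by (simp add: x'_def coface_def)
    have j1: "1 \<le> j" using Pj by (simp add: boundary_coord_def)
    define b where "b = (x j = 1)"
    have lhs: "normal_rep d (Suc m) (d i a c) x = normal_rep d m (d j b (d i a c)) (drop_coord j x)"
      unfolding b_def
      by (rule normal_rep_Suc_least) (use Pj below_j lt Suc.prems x'_below in \<open>auto simp: boundary_coord_def\<close>)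
    have face: "d j b c \<in> K" "dm (d j b c) = Suc m"
      using precubical_face[OF K Suc.prems(1), of j] Suc.prems j1 lt by auto
    have "normal_rep d m (d (i - 1) a (d j b c)) (drop_coord j x) =
        normal_rep d (Suc m) (d j b c) (coface (i - 1) a (drop_coord j x))"
      by (rule Suc.IH[OF face]) (use lt j1 Suc.prems in auto)
    moreover have "d j b (d i a c) = d (i - 1) a (d j b c)"
      using precubical_face_face[OF K Suc.prems(1) j1 lt] Suc.prems by simp
    ultimately show ?thesis
      using rhs lhs drop_coord_coface_less[OF lt, of a x] x'_below[OF lt]
      by (simp add: x'_def b_def del: normal_rep.simps)
  qed
qed

lemma normal_rep_in:
  assumes X: "precubical X dm d"
  shows "c \<in> X \<Longrightarrow> dm c = n \<Longrightarrow> fst (normal_rep d n c x) \<in> X"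
proof (induction n arbitrary: c x)
  case (Suc n c x)
  show ?case
  proof (cases rule: normal_rep_SucE[of n x d c])
    case (2 j)
    then have "d j (x j = 1) c \<in> X" "dm (d j (x j = 1) c) = n"
      using precubical_face[OF X Suc.prems(1), of j] Suc.prems by (auto simp: boundary_coord_def)
    then show ?thesis using Suc.IH 2 by simp
  qed (use Suc.prems in simp)
qed simp

lemma finite_normal_rep_cells: "finite (range (\<lambda>x. fst (normal_rep d n c x)))"
proof (induction n arbitrary: c)
  case (Suc n c)
  have "range (\<lambda>x. fst (normal_rep d (Suc n) c x)) \<subseteq>
      insert c (\<Union>j\<in>{1..Suc n}. \<Union>b. range (\<lambda>x. fst (normal_rep d n (d j b c) x)))"
  proof (rule image_subsetI)
    fix x
    show "fst (normal_rep d (Suc n) c x) \<in>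
        insert c (\<Union>j\<in>{1..Suc n}. \<Union>b. range (\<lambda>x. fst (normal_rep d n (d j b c) x)))"
    proof (cases rule: normal_rep_SucE[of n x d c])
      case (2 j)
      then have "j \<in> {1..Suc n}" by (simp add: boundary_coord_def)
      then show ?thesis unfolding 2(2) by blast
    qed simp
  qed
  then show ?case by (rule finite_subset) (use Suc.IH in auto)
qed simp

lemma finite_normal_rep_fibre: "finite {x \<in> cube n. normal_rep d n c x = q}"
proof (induction n arbitrary: c)
  case 0
  have "{x \<in> cube 0. normal_rep d 0 c x = q} \<subseteq> {snd q}" by auto
  then show ?case by (rule finite_subset) simp
next
  case (Suc n c)
  have "{x \<in> cube (Suc n). normal_rep d (Suc n) c x = q} \<subseteq>
      insert (snd q) (\<Union>j\<in>{1..Suc n}. \<Union>b. coface j b ` {y \<in> cube n. normal_rep d n (d j b c) y = q})"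
  proof (rule subsetI, elim CollectE conjE)
    fix x assume x: "x \<in> cube (Suc n)" and q: "normal_rep d (Suc n) c x = q"
    show "x \<in> insert (snd q)
        (\<Union>j\<in>{1..Suc n}. \<Union>b. coface j b ` {y \<in> cube n. normal_rep d n (d j b c) y = q})"
    proof (cases rule: normal_rep_SucE[of n x d c])
      case (2 j)
      have "x = coface j (x j = 1) (drop_coord j x)"
        using coface_drop_coord_boundary[OF 2(1)] by simp
      moreover have "drop_coord j x \<in> cube n"
        using drop_coord_cube[OF x] 2(1) by (auto simp: boundary_coord_def)
      moreover have "j \<in> {1..Suc n}" using 2(1) by (simp add: boundary_coord_def)
      ultimately show ?thesis
        unfolding q[symmetric] 2(2) by blast
    qed (use q in auto)
  qed
  then show ?case by (rule finite_subset) (use Suc.IH in auto)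
qed

section \<open>Final and compact-open topologies\<close>

definition final_topology :: "'a set \<Rightarrow> 'i set \<Rightarrow> ('i \<Rightarrow> 'b topology) \<Rightarrow> ('i \<Rightarrow> 'b \<Rightarrow> 'a) \<Rightarrow> 'a topology"
  where "final_topology S I T g =
    topology (\<lambda>U. U \<subseteq> S \<and> (\<forall>i\<in>I. openin (T i) {x \<in> topspace (T i). g i x \<in> U}))"

lemma openin_final_topology:
  "openin (final_topology S I T g) U \<longleftrightarrow>
     U \<subseteq> S \<and> (\<forall>i\<in>I. openin (T i) {x \<in> topspace (T i). g i x \<in> U})"
proof -
  have "istopology (\<lambda>U. U \<subseteq> S \<and> (\<forall>i\<in>I. openin (T i) {x \<in> topspace (T i). g i x \<in> U}))"
    unfolding istopology_def
  proof (rule conjI; intro allI impI)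
    fix U V
    assume "U \<subseteq> S \<and> (\<forall>i\<in>I. openin (T i) {x \<in> topspace (T i). g i x \<in> U})"
      and "V \<subseteq> S \<and> (\<forall>i\<in>I. openin (T i) {x \<in> topspace (T i). g i x \<in> V})"
    moreover have "{x \<in> topspace (T i). g i x \<in> U \<inter> V} =
        {x \<in> topspace (T i). g i x \<in> U} \<inter> {x \<in> topspace (T i). g i x \<in> V}" for i
      by blast
    ultimately show "U \<inter> V \<subseteq> S \<and> (\<forall>i\<in>I. openin (T i) {x \<in> topspace (T i). g i x \<in> U \<inter> V})"
      by (auto intro: openin_Int)
  next
    fix \<U>
    assume \<U>: "\<forall>U\<in>\<U>. U \<subseteq> S \<and> (\<forall>i\<in>I. openin (T i) {x \<in> topspace (T i). g i x \<in> U})"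
    have "{x \<in> topspace (T i). g i x \<in> \<Union>\<U>} = (\<Union>U\<in>\<U>. {x \<in> topspace (T i). g i x \<in> U})" for i
      by blast
    then show "\<Union>\<U> \<subseteq> S \<and> (\<forall>i\<in>I. openin (T i) {x \<in> topspace (T i). g i x \<in> \<Union>\<U>})"
      using \<U> by (auto intro!: openin_Union)
  qed
  then show ?thesis
    unfolding final_topology_def by simp
qed

lemma topspace_final_topology:
  assumes "\<And>i. i \<in> I \<Longrightarrow> g i \<in> topspace (T i) \<rightarrow> S"
  shows "topspace (final_topology S I T g) = S"
proof -
  have "{x \<in> topspace (T i). g i x \<in> S} = topspace (T i)" if "i \<in> I" for i
    using assms that by auto
  then have "openin (final_topology S I T g) S"
    unfolding openin_final_topology by simp
  then have "S \<subseteq> topspace (final_topology S I T g)"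
    by (rule openin_subset)
  moreover have "topspace (final_topology S I T g) \<subseteq> S"
    using openin_final_topology[of S I T g "topspace (final_topology S I T g)"] by simp
  ultimately show ?thesis by blast
qed

lemma closedin_final_topology:
  assumes "\<And>i. i \<in> I \<Longrightarrow> g i \<in> topspace (T i) \<rightarrow> S"
  shows "closedin (final_topology S I T g) Z \<longleftrightarrow>
    Z \<subseteq> S \<and> (\<forall>i\<in>I. closedin (T i) {x \<in> topspace (T i). g i x \<in> Z})"
proof -
  have complement: "{x \<in> topspace (T i). g i x \<in> S - Z} = topspace (T i) - {x \<in> topspace (T i). g i x \<in> Z}"
    if "i \<in> I" for i
    using assms that by auto
  have "closedin (final_topology S I T g) Z \<longleftrightarrow> Z \<subseteq> S \<and> openin (final_topology S I T g) (S - Z)"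
    by (simp add: closedin_def topspace_final_topology[OF assms])
  also have "\<dots> \<longleftrightarrow> Z \<subseteq> S \<and> (\<forall>i\<in>I. openin (T i) {x \<in> topspace (T i). g i x \<in> S - Z})"
    by (simp add: openin_final_topology)
  also have "\<dots> \<longleftrightarrow> Z \<subseteq> S \<and> (\<forall>i\<in>I. closedin (T i) {x \<in> topspace (T i). g i x \<in> Z})"
  proof -
    have "openin (T i) {x \<in> topspace (T i). g i x \<in> S - Z} \<longleftrightarrow>
        closedin (T i) {x \<in> topspace (T i). g i x \<in> Z}" if "i \<in> I" for i
      unfolding closedin_def complement[OF that] by auto
    then show ?thesis by auto
  qed
  finally show ?thesis .
qed

lemma continuous_map_final_topology:
  assumes maps: "\<And>i. i \<in> I \<Longrightarrow> g i \<in> topspace (T i) \<rightarrow> S" and i: "i \<in> I"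
  shows "continuous_map (T i) (final_topology S I T g) (g i)"
proof -
  have opens: "openin (T i) {x \<in> topspace (T i). g i x \<in> U}" if "openin (final_topology S I T g) U" for U
    using that i unfolding openin_final_topology by blast
  have "topspace (final_topology S I T g) = S"
    by (rule topspace_final_topology[OF maps])
  then show ?thesis
    using maps[OF i] opens unfolding continuous_map_def by simp
qed

lemma continuous_map_from_final_topology:
  assumes maps: "\<And>i. i \<in> I \<Longrightarrow> g i \<in> topspace (T i) \<rightarrow> S" and f: "f \<in> S \<rightarrow> topspace Z"
    and cont: "\<And>i. i \<in> I \<Longrightarrow> continuous_map (T i) Z (f \<circ> g i)"
  shows "continuous_map (final_topology S I T g) Z f"
proof -
  have opens: "openin (final_topology S I T g) {x \<in> S. f x \<in> V}" if V: "openin Z V" for V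
    unfolding openin_final_topology
  proof (intro conjI ballI)
    fix i assume i: "i \<in> I"
    have "{x \<in> topspace (T i). g i x \<in> {x \<in> S. f x \<in> V}} = {x \<in> topspace (T i). (f \<circ> g i) x \<in> V}"
      using maps[OF i] by auto
    then show "openin (T i) {x \<in> topspace (T i). g i x \<in> {x \<in> S. f x \<in> V}}"
      using openin_continuous_map_preimage[OF cont[OF i] V] by simp
  qed auto
  have "topspace (final_topology S I T g) = S"
    by (rule topspace_final_topology[OF maps])
  then show ?thesis
    using f opens unfolding continuous_map_def by simp
qed

lemma kdelta_eq_final_topology:
  "kdelta T = final_topology (topspace T) {(n, f). continuous_map (simplex_top n) T f}
     (\<lambda>(n, f). simplex_top n) (\<lambda>(n, f). f)"
  unfolding kdelta_def final_topology_def by (simp add: Ball_def)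

lemma simplex_maps_into_topspace:
  "i \<in> {(n, f). continuous_map (simplex_top n) T f} \<Longrightarrow>
     (\<lambda>(n, f). f) i \<in> topspace ((\<lambda>(n, f). simplex_top n) i) \<rightarrow> topspace T"
  by (auto dest: continuous_map_image_subset_topspace)

lemma topspace_kdelta [simp]: "topspace (kdelta T) = topspace T"
  unfolding kdelta_eq_final_topology by (rule topspace_final_topology, rule simplex_maps_into_topspace)

lemma openin_kdelta_if_openin: "openin T U \<Longrightarrow> openin (kdelta T) U"
  unfolding kdelta_eq_final_topology openin_final_topology
  by (auto simp: openin_subset openin_continuous_map_preimage)

lemma continuous_map_simplex_kdelta:
  "continuous_map (simplex_top n) (kdelta T) f \<longleftrightarrow> continuous_map (simplex_top n) T f"
proof
  assume "continuous_map (simplex_top n) (kdelta T) f"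
  then show "continuous_map (simplex_top n) T f"
    unfolding continuous_map_def using openin_kdelta_if_openin by auto
next
  assume "continuous_map (simplex_top n) T f"
  then have "continuous_map ((\<lambda>(n, f). simplex_top n) (n, f))
      (final_topology (topspace T) {(n, f). continuous_map (simplex_top n) T f}
        (\<lambda>(n, f). simplex_top n) (\<lambda>(n, f). f)) ((\<lambda>(n, f). f) (n, f))"
    by (intro continuous_map_final_topology simplex_maps_into_topspace) auto
  then show "continuous_map (simplex_top n) (kdelta T) f"
    unfolding kdelta_eq_final_topology by simp
qed

lemma continuous_map_from_kdelta:
  assumes h: "h \<in> topspace T \<rightarrow> topspace Z"
    and cont: "\<And>n f. continuous_map (simplex_top n) T f \<Longrightarrow> continuous_map (simplex_top n) Z (h \<circ> f)"
  shows "continuous_map (kdelta T) Z h"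
  unfolding kdelta_eq_final_topology
proof (rule continuous_map_from_final_topology[OF simplex_maps_into_topspace h])
  fix i assume "i \<in> {(n, f). continuous_map (simplex_top n) T f}"
  then show "continuous_map ((\<lambda>(n, f). simplex_top n) i) Z (h \<circ> (\<lambda>(n, f). f) i)"
    using cont by auto
qed

lemma continuous_map_kdelta:
  assumes f: "continuous_map S T f"
  shows "continuous_map (kdelta S) (kdelta T) f"
proof (rule continuous_map_from_kdelta)
  show "f \<in> topspace S \<rightarrow> topspace (kdelta T)"
    using continuous_map_image_subset_topspace[OF f] by auto
  fix n g assume "continuous_map (simplex_top n) S g"
  then show "continuous_map (simplex_top n) (kdelta T) (f \<circ> g)"
    unfolding continuous_map_simplex_kdelta by (rule continuous_map_compose[OF _ f])
qed

lemma topspace_compact_open: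
  "topspace (compact_open X Y) = {f. continuous_map X Y f \<and> f \<in> extensional (topspace X)}"
proof -
  have "{f. continuous_map X Y f \<and> f \<in> extensional (topspace X) \<and> f ` {} \<subseteq> topspace Y} \<in>
      {{f. continuous_map X Y f \<and> f \<in> extensional (topspace X) \<and> f ` S \<subseteq> U} | S U.
        compactin X S \<and> openin Y U}" by blast
  then show ?thesis unfolding compact_open_def topology_generated_by_topspace by auto
qed

lemma continuous_map_compact_open:
  "continuous_map Z (compact_open X Y) g \<longleftrightarrow>
     (\<forall>z\<in>topspace Z. continuous_map X Y (g z) \<and> g z \<in> extensional (topspace X)) \<and>
     (\<forall>S U. compactin X S \<and> openin Y U \<longrightarrow> openin Z {z \<in> topspace Z. g z ` S \<subseteq> U})"
    (is "?cont \<longleftrightarrow> ?pts \<and> ?opens")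
proof
  let ?W = "\<lambda>S U. {f. continuous_map X Y f \<and> f \<in> extensional (topspace X) \<and> f ` S \<subseteq> U}"
  assume g: ?cont
  then show "?pts \<and> ?opens"
  proof (intro conjI allI impI)
    show ?pts using continuous_map_image_subset_topspace[OF g] by (auto simp: topspace_compact_open)
    fix S U assume SU: "compactin X S \<and> openin Y U"
    have "openin (compact_open X Y) (?W S U)"
      unfolding compact_open_def by (rule topology_generated_by_Basis) (use SU in blast)
    then have "openin Z {z \<in> topspace Z. g z \<in> ?W S U}"
      by (rule openin_continuous_map_preimage[OF g])
    moreover have "{z \<in> topspace Z. g z \<in> ?W S U} = {z \<in> topspace Z. g z ` S \<subseteq> U}"
      using continuous_map_image_subset_topspace[OF g] by (auto simp: topspace_compact_open)
    ultimately show "openin Z {z \<in> topspace Z. g z ` S \<subseteq> U}" by simp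
  qed
next
  assume "?pts \<and> ?opens"
  then have pts: ?pts and opens: ?opens by blast+
  show ?cont
    unfolding compact_open_def
  proof (rule continuous_on_generated_topo)
    fix W assume "W \<in> {{f. continuous_map X Y f \<and> f \<in> extensional (topspace X) \<and> f ` S \<subseteq> U} | S U.
        compactin X S \<and> openin Y U}"
    then obtain S U where SU: "compactin X S" "openin Y U"
      and W: "W = {f. continuous_map X Y f \<and> f \<in> extensional (topspace X) \<and> f ` S \<subseteq> U}" by blast
    have "g -` W \<inter> topspace Z = {z \<in> topspace Z. g z ` S \<subseteq> U}" using pts W by auto
    then show "openin Z (g -` W \<inter> topspace Z)" using opens SU by simp
  next
    show "g ` topspace Z \<subseteq> \<Union> {{f. continuous_map X Y f \<and> f \<in> extensional (topspace X) \<and> f ` S \<subseteq> U} | S U.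
        compactin X S \<and> openin Y U}"
      using pts by blast
  qed
qed

lemma continuous_map_compact_open_from_subtopology:
  assumes "continuous_map Z (compact_open X (subtopology Y A)) g"
  shows "continuous_map Z (compact_open X Y) g"
proof -
  have pts: "\<And>z. z \<in> topspace Z \<Longrightarrow>
        continuous_map X (subtopology Y A) (g z) \<and> g z \<in> extensional (topspace X)"
    and opens: "\<And>S V. compactin X S \<Longrightarrow> openin (subtopology Y A) V \<Longrightarrow>
        openin Z {z \<in> topspace Z. g z ` S \<subseteq> V}"
    using assms unfolding continuous_map_compact_open by blast+
  have "openin Z {z \<in> topspace Z. g z ` S \<subseteq> U}" if S: "compactin X S" and U: "openin Y U" for S U
  proof -
    have "g z ` S \<subseteq> A \<inter> U \<longleftrightarrow> g z ` S \<subseteq> U" if "z \<in> topspace Z" for z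
      using pts[OF that] compactin_subset_topspace[OF S]
      by (auto simp: continuous_map_in_subtopology)
    then have "{z \<in> topspace Z. g z ` S \<subseteq> A \<inter> U} = {z \<in> topspace Z. g z ` S \<subseteq> U}"
      by blast
    then show ?thesis
      using opens[OF S openin_subtopology_Int2[OF U]] by simp
  qed
  moreover have "continuous_map X Y (g z) \<and> g z \<in> extensional (topspace X)" if "z \<in> topspace Z" for z
    using pts[OF that] by (auto simp: continuous_map_in_subtopology)
  ultimately show ?thesis
    unfolding continuous_map_compact_open by blast
qed

lemma continuous_map_compact_open_into_subtopology:
  assumes g: "continuous_map Z (compact_open X Y) g" and into: "\<And>z. z \<in> topspace Z \<Longrightarrow> g z ` topspace X \<subseteq> A"
  shows "continuous_map Z (compact_open X (subtopology Y A)) g"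
proof -
  have pts: "\<And>z. z \<in> topspace Z \<Longrightarrow> continuous_map X Y (g z) \<and> g z \<in> extensional (topspace X)"
    and opens: "\<And>S U. compactin X S \<Longrightarrow> openin Y U \<Longrightarrow> openin Z {z \<in> topspace Z. g z ` S \<subseteq> U}"
    using g unfolding continuous_map_compact_open by blast+
  have "openin Z {z \<in> topspace Z. g z ` S \<subseteq> V}"
    if S: "compactin X S" and V: "openin (subtopology Y A) V" for S V
  proof -
    obtain U where U: "openin Y U" "V = U \<inter> A"
      using V unfolding openin_subtopology by blast
    have "g z ` S \<subseteq> V \<longleftrightarrow> g z ` S \<subseteq> U" if "z \<in> topspace Z" for z
      using into[OF that] compactin_subset_topspace[OF S] unfolding U(2) by blast
    then have "{z \<in> topspace Z. g z ` S \<subseteq> V} = {z \<in> topspace Z. g z ` S \<subseteq> U}"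
      by blast
    then show ?thesis using opens[OF S U(1)] by simp
  qed
  moreover have "continuous_map X (subtopology Y A) (g z) \<and> g z \<in> extensional (topspace X)"
    if "z \<in> topspace Z" for z
    using pts[OF that] into[OF that] by (auto simp: continuous_map_in_subtopology)
  ultimately show ?thesis
    unfolding continuous_map_compact_open by blast
qed

lemma continuous_map_compact_open_eval:
  assumes "continuous_map Z (compact_open X Y) g" "t \<in> topspace X"
  shows "continuous_map Z Y (\<lambda>z. g z t)"
  unfolding continuous_map_def
proof (intro conjI allI impI)
  show "(\<lambda>z. g z t) \<in> topspace Z \<rightarrow> topspace Y"
    using assms unfolding continuous_map_compact_open by (auto dest: continuous_map_image_subset_topspace)
  fix U assume "openin Y U"
  moreover have "compactin X {t}" using assms(2) by simp
  ultimately have "openin Z {z \<in> topspace Z. g z ` {t} \<subseteq> U}"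
    using assms(1) unfolding continuous_map_compact_open by blast
  then show "openin Z {z \<in> topspace Z. g z t \<in> U}" by simp
qed

lemma finite_if_compactin_closedin_subsets:
  assumes A: "compactin X A" and closed: "\<And>B. B \<subseteq> A \<Longrightarrow> closedin X B"
  shows "finite A"
proof -
  have "discrete_topology A = subtopology X A"
    unfolding discrete_topology_unique
  proof (intro conjI ballI)
    show "topspace (subtopology X A) = A"
      using compactin_subset_topspace[OF A] by auto
    fix a assume "a \<in> A"
    then have "{a} = A \<inter> (topspace X - (A - {a}))"
      using compactin_subset_topspace[OF A] by blast
    moreover have "openin X (topspace X - (A - {a}))"
      using closed[of "A - {a}"] by blast
    ultimately show "openin (subtopology X A) {a}"
      by (metis openin_subtopology_Int2)
  qed
  then show ?thesis
    using compact_space_subtopology[OF A] compact_space_discrete_topology by metis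
qed

section \<open>Carriers and subcomplexes of a realization\<close>

definition normal_form :: "('c \<Rightarrow> nat) \<Rightarrow> (nat \<Rightarrow> bool \<Rightarrow> 'c \<Rightarrow> 'c) \<Rightarrow> 'c \<times> (nat \<Rightarrow> real) \<Rightarrow> 'c \<times> (nat \<Rightarrow> real)"
  where "normal_form dm d p = normal_rep d (dm (fst p)) (fst p) (snd p)"

lemma normal_form_equivclp:
  assumes K: "precubical K dm d" and "equivclp (glue K dm d) p q"
  shows "normal_form dm d p = normal_form dm d q"
proof -
  have glue: "normal_form dm d p = normal_form dm d q" if pq: "glue K dm d p q" for p q
  proof -
    obtain c i a x where c: "c \<in> K" "1 \<le> i" "i \<le> dm c" and pq: "p = (d i a c, x)" "q = (c, coface i a x)"
      using pq unfolding glue_def by blast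
    obtain n where n: "dm c = Suc n" using c by (cases "dm c") auto
    then have "dm (d i a c) = n" using precubical_face[OF K c] by simp
    then show ?thesis
      using normal_rep_coface[OF K c(1) n c(2)] c n unfolding normal_form_def pq by simp
  qed
  show ?thesis
    using assms(2) unfolding equivclp_def
  proof (induction rule: rtranclp_induct)
    case (step y z)
    then show ?case using glue[of y z] glue[of z y] by (auto simp: symclp_def)
  qed simp
qed

lemma normal_rep_eq_if_geo_pt_eq:
  assumes K: "precubical K dm d" and eq: "geo_pt K dm d c x = geo_pt K dm d c' x'"
  shows "normal_rep d (dm c) c x = normal_rep d (dm c') c' x'"
proof -
  have "(c', x') \<in> geo_pt K dm d c' x'" unfolding geo_pt_def by simp
  then have "(c', x') \<in> geo_pt K dm d c x" by (simp only: eq)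
  then have "equivclp (glue K dm d) (c, x) (c', x')" unfolding geo_pt_def by simp
  then have "normal_form dm d (c, x) = normal_form dm d (c', x')"
    by (rule normal_form_equivclp[OF K])
  then show ?thesis unfolding normal_form_def by simp
qed

lemma geo_pt_face:
  assumes "c \<in> K" "1 \<le> i" "i \<le> dm c" "x \<in> cube (dm c - 1)"
  shows "geo_pt K dm d (d i a c) x = geo_pt K dm d c (coface i a x)"
proof -
  have "glue K dm d (d i a c, x) (c, coface i a x)" using assms unfolding glue_def by blast
  then have e: "equivclp (glue K dm d) (d i a c, x) (c, coface i a x)"
    by (simp add: equivclp_def symclp_def r_into_rtranclp)
  show ?thesis
    unfolding geo_pt_def
  proof (intro Collect_cong iffI)
    fix q assume "equivclp (glue K dm d) (d i a c, x) q"
    then show "equivclp (glue K dm d) (c, coface i a x) q"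
      using e by (meson equivclp_sym transpD transp_equivclp)
  next
    fix q assume "equivclp (glue K dm d) (c, coface i a x) q"
    then show "equivclp (glue K dm d) (d i a c, x) q"
      using e by (meson transpD transp_equivclp)
  qed
qed

definition carrier_cell :: "('c \<Rightarrow> nat) \<Rightarrow> (nat \<Rightarrow> bool \<Rightarrow> 'c \<Rightarrow> 'c) \<Rightarrow> ('c \<times> (nat \<Rightarrow> real)) set \<Rightarrow> 'c"
  where "carrier_cell dm d P = fst (normal_form dm d (SOME q. q \<in> P))"

lemma carrier_cell_geo_pt:
  assumes K: "precubical K dm d"
  shows "carrier_cell dm d (geo_pt K dm d c x) = fst (normal_rep d (dm c) c x)"
proof -
  have "(c, x) \<in> geo_pt K dm d c x" unfolding geo_pt_def by simp
  then have "(SOME q. q \<in> geo_pt K dm d c x) \<in> geo_pt K dm d c x" by (rule someI)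
  then have "equivclp (glue K dm d) (c, x) (SOME q. q \<in> geo_pt K dm d c x)"
    by (simp add: geo_pt_def)
  then have "normal_form dm d (c, x) = normal_form dm d (SOME q. q \<in> geo_pt K dm d c x)"
    by (rule normal_form_equivclp[OF K])
  then show ?thesis unfolding carrier_cell_def normal_form_def by simp
qed

definition geo_points :: "'c set \<Rightarrow> 'c set \<Rightarrow> ('c \<Rightarrow> nat) \<Rightarrow> (nat \<Rightarrow> bool \<Rightarrow> 'c \<Rightarrow> 'c)
    \<Rightarrow> ('c \<times> (nat \<Rightarrow> real)) set set"
  where "geo_points K X dm d = {geo_pt K dm d c x | c x. c \<in> X \<and> x \<in> cube (dm c)}"

lemma geo_points_mono: "X \<subseteq> Y \<Longrightarrow> geo_points K X dm d \<subseteq> geo_points K Y dm d"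
  unfolding geo_points_def by blast

lemma carrier_cell_in:
  assumes K: "precubical K dm d" and X: "precubical X dm d" and P: "P \<in> geo_points K X dm d"
  shows "carrier_cell dm d P \<in> X"
proof -
  obtain c x where "c \<in> X" "P = geo_pt K dm d c x"
    using P unfolding geo_points_def by blast
  then show ?thesis
    using normal_rep_in[OF X] carrier_cell_geo_pt[OF K] by simp
qed

lemma realization_eq_final_topology:
  "realization K X dm d =
     final_topology (geo_points K X dm d) X (\<lambda>c. cube_top (dm c)) (geo_pt K dm d)"
  unfolding realization_def final_topology_def geo_points_def by simp

lemma topspace_realization: "topspace (realization K X dm d) = geo_points K X dm d"
  unfolding realization_eq_final_topology
  by (rule topspace_final_topology) (auto simp: geo_points_def)

lemma openin_realization:
  "openin (realization K X dm d) U \<longleftrightarrow> U \<subseteq> geo_points K X dm d \<and>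
      (\<forall>c\<in>X. openin (cube_top (dm c)) {x \<in> cube (dm c). geo_pt K dm d c x \<in> U})"
  unfolding realization_eq_final_topology openin_final_topology by simp

lemma closedin_realization:
  "closedin (realization K X dm d) Z \<longleftrightarrow> Z \<subseteq> geo_points K X dm d \<and>
      (\<forall>c\<in>X. closedin (cube_top (dm c)) {x \<in> cube (dm c). geo_pt K dm d c x \<in> Z})"
  unfolding realization_eq_final_topology
  by (subst closedin_final_topology) (auto simp: geo_points_def)

lemma continuous_map_geo_pt:
  "c \<in> X \<Longrightarrow> continuous_map (cube_top (dm c)) (realization K X dm d) (geo_pt K dm d c)"
  unfolding realization_eq_final_topology
  by (rule continuous_map_final_topology) (auto simp: geo_points_def)

text \<open>The carrier of a point of \<open>|X|\<close> lies in \<open>X\<close>, while an interior point of \<open>e\<close> has carrier \<open>e\<close>.\<close>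
lemma boundary_coord_if_geo_pt_in_subcomplex:
  assumes K: "precubical K dm d" and X: "precubical X dm d" and e: "e \<notin> X"
    and in_X: "geo_pt K dm d e x \<in> geo_points K X dm d"
  obtains j where "boundary_coord (dm e) x j"
proof -
  obtain c y where c: "c \<in> X" and eq: "geo_pt K dm d e x = geo_pt K dm d c y"
    using in_X unfolding geo_points_def by blast
  have carrier_X: "fst (normal_rep d (dm e) e x) \<in> X"
    using normal_rep_eq_if_geo_pt_eq[OF K eq] normal_rep_in[OF X c] by simp
  show ?thesis
  proof (rule ccontr)
    assume "\<not> thesis"
    then have "\<And>j. \<not> boundary_coord (dm e) x j" using that by blast
    then have "normal_rep d (dm e) e x = (e, x)" by (rule normal_rep_interior)
    then show False using carrier_X e by simp
  qed
qed

lemma geo_pt_preimage_eq_faces: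
  assumes K: "precubical K dm d" and X: "precubical X dm d" and e: "e \<in> K" "e \<notin> X"
    and Z: "Z \<subseteq> geo_points K X dm d"
  shows "{x \<in> cube (dm e). geo_pt K dm d e x \<in> Z} =
    (\<Union>j\<in>{1..dm e}. \<Union>b. coface j b ` {y \<in> cube (dm e - 1). geo_pt K dm d (d j b e) y \<in> Z})"
proof (intro equalityI subsetI)
  fix x assume x: "x \<in> {x \<in> cube (dm e). geo_pt K dm d e x \<in> Z}"
  then obtain j where j: "boundary_coord (dm e) x j"
    using boundary_coord_if_geo_pt_in_subcomplex[OF K X e(2)] Z by blast
  let ?b = "x j = 1"
  have x_eq: "x = coface j ?b (drop_coord j x)"
    using coface_drop_coord_boundary[OF j] by simp
  have j_range: "j \<in> {1..dm e}" using j by (simp add: boundary_coord_def)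
  have y: "drop_coord j x \<in> cube (dm e - 1)"
    using drop_coord_cube[of x "dm e" j] x j_range by auto
  have "geo_pt K dm d (d j ?b e) (drop_coord j x) = geo_pt K dm d e x"
    using geo_pt_face[of e K j dm "drop_coord j x" d ?b] e(1) y j_range x_eq by simp
  then have "x \<in> coface j ?b ` {y \<in> cube (dm e - 1). geo_pt K dm d (d j ?b e) y \<in> Z}"
    using x y by (intro image_eqI[where x = "drop_coord j x" and f = "coface j ?b", OF x_eq]) auto
  then show "x \<in> (\<Union>j\<in>{1..dm e}. \<Union>b. coface j b ` {y \<in> cube (dm e - 1). geo_pt K dm d (d j b e) y \<in> Z})"
    using j_range by blast
next
  fix x assume "x \<in> (\<Union>j\<in>{1..dm e}. \<Union>b. coface j b ` {y \<in> cube (dm e - 1). geo_pt K dm d (d j b e) y \<in> Z})"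
  then obtain j b y where j: "j \<in> {1..dm e}" and y: "y \<in> cube (dm e - 1)" "geo_pt K dm d (d j b e) y \<in> Z"
    and x: "x = coface j b y" by blast
  have "1 \<le> j" "j \<le> dm e" using j by auto
  then show "x \<in> {x \<in> cube (dm e). geo_pt K dm d e x \<in> Z}"
    using geo_pt_face[of e K j dm y d b] e(1) y coface_cube[OF y(1)] unfolding x by simp
qed

text \<open>Closedness in \<open>|Y|\<close> is tested on the cells of \<open>Y - X\<close> by induction on their dimension:
  the preimage of \<open>Z \<subseteq> |X|\<close> lies in the boundary of the cube and is the finite union of its
  (closed) preimages in the faces.\<close>
lemma closedin_realization_mono:
  assumes K: "precubical K dm d" and X: "precubical X dm d" and "X \<subseteq> Y" "Y \<subseteq> K"
    and Z: "closedin (realization K X dm d) Z"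
  shows "closedin (realization K Y dm d) Z"
proof -
  have Z_sub: "Z \<subseteq> geo_points K X dm d"
    and Z_X: "\<And>c. c \<in> X \<Longrightarrow> closedin (cube_top (dm c)) {x \<in> cube (dm c). geo_pt K dm d c x \<in> Z}"
    using Z unfolding closedin_realization by auto
  have "closedin (cube_top n) {x \<in> cube n. geo_pt K dm d e x \<in> Z}" if "e \<in> K" "dm e = n" for n e
    using that
  proof (induction n arbitrary: e rule: less_induct)
    case (less n e)
    show ?case
    proof (cases "e \<in> X")
      case False
      let ?F = "\<lambda>j b. coface j b ` {y \<in> cube (n - 1). geo_pt K dm d (d j b e) y \<in> Z}"
      have "closedin (cube_top n) (?F j b)" if j: "j \<in> {1..n}" for j b
        using precubical_face[OF K less.prems(1), of j b] less.prems j
        by (intro closedin_coface_image less.IH) auto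
      then have "closedin (cube_top n) (\<Union>b. ?F j b)" if j: "j \<in> {1..n}" for j
        using j by (intro closedin_Union) auto
      then have "closedin (cube_top n) (\<Union>j\<in>{1..n}. \<Union>b. ?F j b)"
        by (intro closedin_Union) auto
      then show ?thesis
        using geo_pt_preimage_eq_faces[OF K X less.prems(1) False Z_sub] less.prems(2) by simp
    qed (use Z_X less.prems in auto)
  qed
  then show ?thesis
    unfolding closedin_realization using Z_sub geo_points_mono[OF \<open>X \<subseteq> Y\<close>] \<open>Y \<subseteq> K\<close> by blast
qed

lemma subtopology_realization:
  assumes K: "precubical K dm d" and X: "precubical X dm d" and XY: "X \<subseteq> Y" and YK: "Y \<subseteq> K"
  shows "subtopology (realization K Y dm d) (geo_points K X dm d) = realization K X dm d"
proof (rule topology_eq[THEN iffD2], intro allI iffI)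
  fix V assume "openin (subtopology (realization K Y dm d) (geo_points K X dm d)) V"
  then obtain W where W: "openin (realization K Y dm d) W" and V: "V = W \<inter> geo_points K X dm d"
    unfolding openin_subtopology by blast
  have "{x \<in> cube (dm c). geo_pt K dm d c x \<in> W \<inter> geo_points K X dm d} =
      {x \<in> cube (dm c). geo_pt K dm d c x \<in> W}" if "c \<in> X" for c
    using that by (auto simp: geo_points_def)
  then show "openin (realization K X dm d) V"
    using W XY unfolding V openin_realization by auto
next
  fix V assume V: "openin (realization K X dm d) V"
  have "closedin (realization K X dm d) (geo_points K X dm d - V)"
    using V by (metis closedin_diff closedin_topspace topspace_realization)
  then have "closedin (realization K Y dm d) (geo_points K X dm d - V)"
    by (rule closedin_realization_mono[OF K X XY YK])
  then have "openin (realization K Y dm d) (geo_points K Y dm d - (geo_points K X dm d - V))"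
    by (metis openin_diff openin_topspace topspace_realization)
  moreover have "V = (geo_points K Y dm d - (geo_points K X dm d - V)) \<inter> geo_points K X dm d"
    using openin_subset[OF V] geo_points_mono[OF XY] unfolding topspace_realization by blast
  ultimately show "openin (subtopology (realization K Y dm d) (geo_points K X dm d)) V"
    unfolding openin_subtopology by blast
qed

lemma finite_geo_pt_fibre:
  assumes K: "precubical K dm d"
  shows "finite {x \<in> cube (dm e). geo_pt K dm d e x = P}"
proof (cases "\<exists>x0\<in>cube (dm e). geo_pt K dm d e x0 = P")
  case True
  then obtain x0 where x0: "geo_pt K dm d e x0 = P" by blast
  have "normal_rep d (dm e) e x = normal_rep d (dm e) e x0" if "geo_pt K dm d e x = P" for x
    using normal_rep_eq_if_geo_pt_eq[OF K, of e x e x0] that x0 by simp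
  then have "{x \<in> cube (dm e). geo_pt K dm d e x = P} \<subseteq>
      {x \<in> cube (dm e). normal_rep d (dm e) e x = normal_rep d (dm e) e x0}"
    by blast
  then show ?thesis using finite_normal_rep_fibre by (rule finite_subset)
next
  case False
  then have "{x \<in> cube (dm e). geo_pt K dm d e x = P} = {}" by blast
  then show ?thesis by (simp only: finite.emptyI)
qed

text \<open>Each cube meets only finitely many of the open cells, and each of them in finitely many points.\<close>
lemma closedin_realization_if_inj_on_carrier_cell:
  assumes K: "precubical K dm d" and B: "B \<subseteq> geo_points K Y dm d"
    and inj: "inj_on (carrier_cell dm d) B"
  shows "closedin (realization K Y dm d) B"
  unfolding closedin_realization
proof (intro conjI ballI)
  fix e assume "e \<in> Y"
  let ?B = "B \<inter> geo_pt K dm d e ` cube (dm e)"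
  have "carrier_cell dm d ` ?B \<subseteq> range (\<lambda>x. fst (normal_rep d (dm e) e x))"
  proof (rule image_subsetI)
    fix P assume "P \<in> ?B"
    then obtain x where "P = geo_pt K dm d e x" by blast
    then show "carrier_cell dm d P \<in> range (\<lambda>x. fst (normal_rep d (dm e) e x))"
      by (simp add: carrier_cell_geo_pt[OF K])
  qed
  then have "finite (carrier_cell dm d ` ?B)"
    using finite_normal_rep_cells by (rule finite_subset)
  moreover have "inj_on (carrier_cell dm d) ?B"
    using inj by (rule inj_on_subset) blast
  ultimately have "finite ?B"
    by (rule finite_imageD)
  then have "finite (\<Union>P\<in>?B. {x \<in> cube (dm e). geo_pt K dm d e x = P})"
    using finite_geo_pt_fibre[OF K] by blast
  moreover have "{x \<in> cube (dm e). geo_pt K dm d e x \<in> B} \<subseteq>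
      (\<Union>P\<in>?B. {x \<in> cube (dm e). geo_pt K dm d e x = P})"
    by blast
  ultimately have "finite {x \<in> cube (dm e). geo_pt K dm d e x \<in> B}"
    by (rule finite_subset[rotated])
  then show "closedin (cube_top (dm e)) {x \<in> cube (dm e). geo_pt K dm d e x \<in> B}"
    by (rule closedin_cube_top_finite) blast
qed (rule B)

lemma finite_carrier_cell_image:
  assumes K: "precubical K dm d" and E: "compactin (realization K Y dm d) E"
  shows "finite (carrier_cell dm d ` E)"
proof -
  obtain A where A: "A \<subseteq> E" "inj_on (carrier_cell dm d) A" "carrier_cell dm d ` E = carrier_cell dm d ` A"
    using subset_image_inj[of "carrier_cell dm d ` E" "carrier_cell dm d" E] by blast
  have E_sub: "E \<subseteq> geo_points K Y dm d"
    using compactin_subset_topspace[OF E] by (simp add: topspace_realization)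
  have closed: "closedin (realization K Y dm d) B" if "B \<subseteq> A" for B
    using that A E_sub inj_on_subset
    by (intro closedin_realization_if_inj_on_carrier_cell[OF K]) auto
  have "compactin (realization K Y dm d) A"
    by (rule closed_compactin[OF E A(1) closed]) simp
  then have "finite A"
    by (rule finite_if_compactin_closedin_subsets) (rule closed)
  then show ?thesis using A(3) by simp
qed

section \<open>Natural paths and branch sets\<close>

lemma lowf_in:
  assumes X: "precubical X dm d"
  shows "c \<in> X \<Longrightarrow> k \<le> dm c \<Longrightarrow> lowf d k c \<in> X \<and> dm (lowf d k c) = dm c - k"
proof (induction k arbitrary: c)
  case (Suc k c)
  then show ?case
    using precubical_face[OF X Suc.prems(1), of "Suc k" False] Suc.IH[of "d (Suc k) False c"] by auto
qed simp

lemma init_vertex_in: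
  "precubical X dm d \<Longrightarrow> c \<in> X \<Longrightarrow> init_vertex dm d c \<in> X \<and> dm (init_vertex dm d c) = 0"
  using lowf_in[of X dm d c "dm c"] unfolding init_vertex_def by simp

lemma lowf_face:
  assumes X: "precubical X dm d"
  shows "c \<in> X \<Longrightarrow> dm c = Suc n \<Longrightarrow> 1 \<le> i \<Longrightarrow> i \<le> Suc n \<Longrightarrow>
    lowf d n (d i False c) = lowf d (Suc n) c"
proof (induction n arbitrary: c i)
  case (Suc m c i)
  show ?case
  proof (cases "i = Suc (Suc m)")
    case False
    then have i: "i \<le> Suc m" using Suc.prems by simp
    define c' where "c' = d (Suc (Suc m)) False c"
    have c': "c' \<in> X" "dm c' = Suc m"
      using precubical_face[OF X Suc.prems(1), of "Suc (Suc m)"] Suc.prems unfolding c'_def by auto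
    have "lowf d (Suc m) (d i False c) = lowf d m (d (Suc m) False (d i False c))" by simp
    also have "\<dots> = lowf d m (d i False c')"
      using precubical_face_face[OF X Suc.prems(1) Suc.prems(3), of "Suc (Suc m)"] Suc.prems i
      unfolding c'_def by simp
    also have "\<dots> = lowf d (Suc m) c'" by (rule Suc.IH[OF c']) (use Suc.prems i in auto)
    also have "\<dots> = lowf d (Suc (Suc m)) c" by (simp add: c'_def)
    finally show ?thesis .
  qed simp
next
  case 0
  then have "i = 1" by simp
  then show ?case by simp
qed

lemma init_vertex_face:
  assumes X: "precubical X dm d" and c: "c \<in> X" and i: "1 \<le> i" "i \<le> dm c"
  shows "init_vertex dm d (d i False c) = init_vertex dm d c"
proof -
  obtain n where n: "dm c = Suc n" using i by (cases "dm c") auto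
  then have "dm (d i False c) = n" using precubical_face[OF X c i] by simp
  then show ?thesis unfolding init_vertex_def using lowf_face[OF X c n i(1)] i n by simp
qed

lemma natural_path_in_cube: "\<phi> \<in> natural_paths n \<epsilon> \<Longrightarrow> t \<in> {0..\<epsilon>} \<Longrightarrow> \<phi> t \<in> cube n"
  unfolding natural_paths_def
  by (auto dest!: continuous_map_image_subset_topspace simp: interval_top_def image_subset_iff)

text \<open>The coordinates of \<open>\<phi> \<epsilon>\<close> sum to \<open>\<epsilon> < 1\<close>, so a boundary coordinate of \<open>\<phi> \<epsilon>\<close> is \<open>0\<close>,
  and by monotonicity it vanishes along the whole path.\<close>
lemma natural_path_face:
  assumes \<phi>: "\<phi> \<in> natural_paths (Suc n) \<epsilon>" and \<epsilon>: "0 < \<epsilon>" "\<epsilon> < 1"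
    and j: "boundary_coord (Suc n) (\<phi> \<epsilon>) j"
  shows "1 \<le> n" and "\<And>t. t \<in> {0..\<epsilon>} \<Longrightarrow> \<phi> t j = 0"
    and "restrict (\<lambda>t. drop_coord j (\<phi> t)) {0..\<epsilon>} \<in> natural_paths n \<epsilon>"
proof -
  have j_range: "1 \<le> j" "j \<le> Suc n" using j by (auto simp: boundary_coord_def)
  have cont: "continuous_map (interval_top \<epsilon>) (cube_top (Suc n)) \<phi>"
    and mono: "\<And>s t i. 0 \<le> s \<Longrightarrow> s \<le> t \<Longrightarrow> t \<le> \<epsilon> \<Longrightarrow> \<phi> s i \<le> \<phi> t i"
    and sum: "\<And>t. t \<in> {0..\<epsilon>} \<Longrightarrow> (\<Sum>i=1..Suc n. \<phi> t i) = t"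
    using \<phi> unfolding natural_paths_def by auto
  have nonneg: "0 \<le> \<phi> t i" if "t \<in> {0..\<epsilon>}" "1 \<le> i" "i \<le> Suc n" for t i
    using natural_path_in_cube[OF \<phi> that(1)] that by (auto simp: cube_def)
  have \<epsilon>_in: "\<epsilon> \<in> {0..\<epsilon>}" using \<epsilon> by simp
  have "\<phi> \<epsilon> j \<le> (\<Sum>i=1..Suc n. \<phi> \<epsilon> i)"
    by (rule member_le_sum) (use j_range nonneg[OF \<epsilon>_in] in auto)
  then have "\<phi> \<epsilon> j = 0" using sum[OF \<epsilon>_in] j \<epsilon> by (auto simp: boundary_coord_def)
  then show zero: "\<phi> t j = 0" if "t \<in> {0..\<epsilon>}" for t
    using mono[of t \<epsilon> j] nonneg[OF that j_range] that by auto
  show "1 \<le> n"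
  proof (rule ccontr)
    assume "\<not> 1 \<le> n"
    then have "n = 0" "j = 1" using j_range by auto
    then show False using sum[OF \<epsilon>_in] zero[OF \<epsilon>_in] \<epsilon> by simp
  qed
  have "continuous_map (interval_top \<epsilon>) (cube_top n) (drop_coord j \<circ> \<phi>)"
    using continuous_map_compose[OF cont continuous_map_drop_coord[OF j_range]] by simp
  then have "continuous_map (interval_top \<epsilon>) (cube_top n) (restrict (\<lambda>t. drop_coord j (\<phi> t)) {0..\<epsilon>})"
    by (rule continuous_map_eq) (auto simp: interval_top_def)
  moreover have "(\<Sum>i=1..n. drop_coord j (\<phi> t) i) = t" if "t \<in> {0..\<epsilon>}" for t
    using sum_drop_coord[OF j_range, of "\<phi> t"] sum[OF that] zero[OF that] by simp
  ultimately show "restrict (\<lambda>t. drop_coord j (\<phi> t)) {0..\<epsilon>} \<in> natural_paths n \<epsilon>"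
    unfolding natural_paths_def using mono by (auto simp: drop_coord_def)
qed

lemma branch_setE:
  assumes "p \<in> branch_set K X dm d \<epsilon> \<alpha>"
  obtains c \<phi> where "p = restrict (\<lambda>t. geo_pt K dm d c (\<phi> t)) {0..\<epsilon>}" "c \<in> X" "1 \<le> dm c"
    "init_vertex dm d c = \<alpha>" "\<phi> \<in> natural_paths (dm c) \<epsilon>"
  using assms unfolding branch_set_def cells_from_def by blast

lemma branch_setI:
  "c \<in> X \<Longrightarrow> 1 \<le> dm c \<Longrightarrow> init_vertex dm d c = \<alpha> \<Longrightarrow> \<phi> \<in> natural_paths (dm c) \<epsilon> \<Longrightarrow>
    restrict (\<lambda>t. geo_pt K dm d c (\<phi> t)) {0..\<epsilon>} \<in> branch_set K X dm d \<epsilon> \<alpha>"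
  unfolding branch_set_def cells_from_def by blast

lemma branch_set_mono: "X \<subseteq> Y \<Longrightarrow> branch_set K X dm d \<epsilon> \<alpha> \<subseteq> branch_set K Y dm d \<epsilon> \<alpha>"
  unfolding branch_set_def cells_from_def by blast

lemma geo_pt_natural_path_face:
  assumes "c \<in> K" "dm c = Suc n" and \<phi>: "\<phi> \<in> natural_paths (Suc n) \<epsilon>" and \<epsilon>: "0 < \<epsilon>" "\<epsilon> < 1"
    and j: "boundary_coord (Suc n) (\<phi> \<epsilon>) j"
  shows "restrict (\<lambda>t. geo_pt K dm d c (\<phi> t)) {0..\<epsilon>} =
    restrict (\<lambda>t. geo_pt K dm d (d j False c) (drop_coord j (\<phi> t))) {0..\<epsilon>}"
proof (rule restrict_ext)
  fix t assume t: "t \<in> {0..\<epsilon>}"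
  have j_range: "1 \<le> j" "j \<le> dm c" using j assms(2) by (auto simp: boundary_coord_def)
  have "drop_coord j (\<phi> t) \<in> cube (dm c - 1)"
    using drop_coord_cube[OF natural_path_in_cube[OF \<phi> t] j_range[unfolded assms(2)]] assms(2) by simp
  moreover have "coface j False (drop_coord j (\<phi> t)) = \<phi> t"
    using coface_drop_coord[of "\<phi> t" j False] natural_path_face(2)[OF \<phi> \<epsilon> j t] by simp
  ultimately show "geo_pt K dm d c (\<phi> t) = geo_pt K dm d (d j False c) (drop_coord j (\<phi> t))"
    using geo_pt_face[of c K j dm "drop_coord j (\<phi> t)" d False] assms(1) j_range by simp
qed

text \<open>Push the path onto the faces it never leaves, until its endpoint is interior.\<close>
lemma natural_path_interior_rep:
  assumes X: "precubical X dm d" and XK: "X \<subseteq> K" and \<epsilon>: "0 < \<epsilon>" "\<epsilon> < 1"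
  shows "c \<in> X \<Longrightarrow> dm c = n \<Longrightarrow> 1 \<le> n \<Longrightarrow> \<phi> \<in> natural_paths n \<epsilon> \<Longrightarrow>
    \<exists>c' \<phi>'. restrict (\<lambda>t. geo_pt K dm d c (\<phi> t)) {0..\<epsilon>} = restrict (\<lambda>t. geo_pt K dm d c' (\<phi>' t)) {0..\<epsilon>}
      \<and> c' \<in> X \<and> 1 \<le> dm c' \<and> init_vertex dm d c' = init_vertex dm d c \<and> \<phi>' \<in> natural_paths (dm c') \<epsilon>
      \<and> (\<forall>j. \<not> boundary_coord (dm c') (\<phi>' \<epsilon>) j)"
proof (induction n arbitrary: c \<phi>)
  case (Suc n c \<phi>)
  show ?case
  proof (cases "\<exists>j. boundary_coord (Suc n) (\<phi> \<epsilon>) j")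
    case True
    then obtain j where j: "boundary_coord (Suc n) (\<phi> \<epsilon>) j" by blast
    have j_range: "1 \<le> j" "j \<le> dm c" using j Suc.prems(2) by (auto simp: boundary_coord_def)
    define \<psi> where "\<psi> = restrict (\<lambda>t. drop_coord j (\<phi> t)) {0..\<epsilon>}"
    note face = natural_path_face[OF Suc.prems(4) \<epsilon> j]
    have "restrict (\<lambda>t. geo_pt K dm d c (\<phi> t)) {0..\<epsilon>} =
        restrict (\<lambda>t. geo_pt K dm d (d j False c) (drop_coord j (\<phi> t))) {0..\<epsilon>}"
      by (rule geo_pt_natural_path_face) (use XK Suc.prems \<epsilon> j in auto)
    also have "\<dots> = restrict (\<lambda>t. geo_pt K dm d (d j False c) (\<psi> t)) {0..\<epsilon>}"
      by (rule restrict_ext) (simp add: \<psi>_def)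
    finally have "restrict (\<lambda>t. geo_pt K dm d c (\<phi> t)) {0..\<epsilon>} =
        restrict (\<lambda>t. geo_pt K dm d (d j False c) (\<psi> t)) {0..\<epsilon>}" .
    moreover have "d j False c \<in> X" "dm (d j False c) = n"
      using precubical_face[OF X Suc.prems(1) j_range] Suc.prems(2) by auto
    moreover have "init_vertex dm d (d j False c) = init_vertex dm d c"
      by (rule init_vertex_face[OF X Suc.prems(1) j_range])
    moreover have "\<psi> \<in> natural_paths n \<epsilon>"
      unfolding \<psi>_def by (rule face(3))
    ultimately show ?thesis
      using Suc.IH[of "d j False c" \<psi>] face(1) by simp
  next
    case False
    then show ?thesis
      using Suc.prems by (intro exI[of _ c] exI[of _ \<phi>]) auto
  qed
qed simp

lemma branch_set_interior_rep:
  assumes "precubical X dm d" "X \<subseteq> K" "0 < \<epsilon>" "\<epsilon> < 1" and p: "p \<in> branch_set K X dm d \<epsilon> \<alpha>"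
  obtains c \<phi> where "p = restrict (\<lambda>t. geo_pt K dm d c (\<phi> t)) {0..\<epsilon>}" "c \<in> X" "1 \<le> dm c"
    "init_vertex dm d c = \<alpha>" "\<phi> \<in> natural_paths (dm c) \<epsilon>" "\<And>j. \<not> boundary_coord (dm c) (\<phi> \<epsilon>) j"
proof -
  obtain c \<phi> where p_eq: "p = restrict (\<lambda>t. geo_pt K dm d c (\<phi> t)) {0..\<epsilon>}" and c: "c \<in> X" "1 \<le> dm c"
    "init_vertex dm d c = \<alpha>" "\<phi> \<in> natural_paths (dm c) \<epsilon>"
    using p by (rule branch_setE)
  obtain c' \<phi>' where "restrict (\<lambda>t. geo_pt K dm d c (\<phi> t)) {0..\<epsilon>} = restrict (\<lambda>t. geo_pt K dm d c' (\<phi>' t)) {0..\<epsilon>}"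
    "c' \<in> X" "1 \<le> dm c'" "init_vertex dm d c' = init_vertex dm d c" "\<phi>' \<in> natural_paths (dm c') \<epsilon>"
    "\<forall>j. \<not> boundary_coord (dm c') (\<phi>' \<epsilon>) j"
    using natural_path_interior_rep[OF assms(1-4) c(1) refl c(2,4)] by blast
  then show ?thesis
    using that[of c' \<phi>'] p_eq c(3) by simp
qed

lemma branch_set_carrier:
  assumes K: "precubical K dm d" and X: "precubical X dm d" and XK: "X \<subseteq> K" and \<epsilon>: "0 < \<epsilon>" "\<epsilon> < 1"
    and p: "p \<in> branch_set K X dm d \<epsilon> \<alpha>" and carrier_Y: "carrier_cell dm d (p \<epsilon>) \<in> Y"
  shows "p \<in> branch_set K Y dm d \<epsilon> \<alpha>"
proof -
  obtain c \<phi> where p_eq: "p = restrict (\<lambda>t. geo_pt K dm d c (\<phi> t)) {0..\<epsilon>}" and c: "1 \<le> dm c"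
    "init_vertex dm d c = \<alpha>" "\<phi> \<in> natural_paths (dm c) \<epsilon>"
    and interior: "\<And>j. \<not> boundary_coord (dm c) (\<phi> \<epsilon>) j"
    using branch_set_interior_rep[OF X XK \<epsilon> p] by metis
  have "p \<epsilon> = geo_pt K dm d c (\<phi> \<epsilon>)" using p_eq \<epsilon> by simp
  then have "carrier_cell dm d (p \<epsilon>) = c"
    using carrier_cell_geo_pt[OF K] normal_rep_interior[of "dm c" "\<phi> \<epsilon>" d c, OF interior] by simp
  then have "c \<in> Y" using carrier_Y by simp
  then show ?thesis
    unfolding p_eq by (rule branch_setI[OF _ c])
qed

lemma continuous_map_branch_path:
  assumes "p \<in> branch_set K X dm d \<epsilon> \<alpha>"
  shows "continuous_map (interval_top \<epsilon>) (realization K X dm d) p"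
proof -
  obtain c \<phi> where p: "p = restrict (\<lambda>t. geo_pt K dm d c (\<phi> t)) {0..\<epsilon>}" and c: "c \<in> X"
    and \<phi>: "\<phi> \<in> natural_paths (dm c) \<epsilon>"
    using assms by (rule branch_setE)
  have "continuous_map (interval_top \<epsilon>) (cube_top (dm c)) \<phi>"
    using \<phi> by (simp add: natural_paths_def)
  then have "continuous_map (interval_top \<epsilon>) (realization K X dm d) (geo_pt K dm d c \<circ> \<phi>)"
    by (rule continuous_map_compose[OF _ continuous_map_geo_pt[OF c]])
  then show ?thesis
    unfolding p by (rule continuous_map_eq) (auto simp: interval_top_def)
qed

lemma topspace_branch_top: "topspace (branch_top K X dm d \<epsilon> \<alpha>) = branch_set K X dm d \<epsilon> \<alpha>"
proof -
  have "branch_set K X dm d \<epsilon> \<alpha> \<subseteq> topspace (TOP (interval_top \<epsilon>) (realization K X dm d))"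
  proof
    fix p assume p: "p \<in> branch_set K X dm d \<epsilon> \<alpha>"
    moreover have "p \<in> extensional (topspace (interval_top \<epsilon>))"
      using p by (auto simp: branch_set_def interval_top_def)
    ultimately show "p \<in> topspace (TOP (interval_top \<epsilon>) (realization K X dm d))"
      unfolding TOP_def topspace_kdelta topspace_compact_open
      using continuous_map_branch_path[OF p] by simp
  qed
  then show ?thesis
    unfolding branch_top_def topspace_kdelta topspace_subtopology by blast
qed

lemma continuous_map_simplex_branch_top:
  "continuous_map (simplex_top n) (branch_top K X dm d \<epsilon> \<alpha>) f \<longleftrightarrow>
     continuous_map (simplex_top n) (compact_open (interval_top \<epsilon>) (realization K X dm d)) f \<and>
     f \<in> topspace (simplex_top n) \<rightarrow> branch_set K X dm d \<epsilon> \<alpha>"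
  unfolding branch_top_def continuous_map_simplex_kdelta continuous_map_in_subtopology TOP_def ..

lemma continuous_map_compact_open_realization_mono:
  assumes "precubical K dm d" "precubical X dm d" "X \<subseteq> Y" "Y \<subseteq> K"
  shows "continuous_map (compact_open I (realization K X dm d)) (compact_open I (realization K Y dm d)) id"
  using continuous_map_compact_open_from_subtopology[of "compact_open I (realization K X dm d)" I
      "realization K Y dm d" "geo_points K X dm d" id]
  unfolding subtopology_realization[OF assms] by simp

lemma continuous_map_branch_top_mono:
  assumes "precubical K dm d" "precubical X dm d" "X \<subseteq> Y" "Y \<subseteq> K"
  shows "continuous_map (branch_top K X dm d \<epsilon> \<alpha>) (branch_top K Y dm d \<epsilon> \<alpha>) id"
  unfolding branch_top_def
proof (rule continuous_map_kdelta)
  have "continuous_map (TOP (interval_top \<epsilon>) (realization K X dm d)) (TOP (interval_top \<epsilon>) (realization K Y dm d)) id"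
    unfolding TOP_def by (rule continuous_map_kdelta[OF continuous_map_compact_open_realization_mono[OF assms]])
  then show "continuous_map (subtopology (TOP (interval_top \<epsilon>) (realization K X dm d)) (branch_set K X dm d \<epsilon> \<alpha>))
      (subtopology (TOP (interval_top \<epsilon>) (realization K Y dm d)) (branch_set K Y dm d \<epsilon> \<alpha>)) id"
    using branch_set_mono[OF assms(3), of K dm d \<epsilon> \<alpha>]
    by (auto simp: continuous_map_in_subtopology intro: continuous_map_from_subtopology)
qed

definition vertices :: "'c set \<Rightarrow> ('c \<Rightarrow> nat) \<Rightarrow> 'c set"
  where "vertices X dm = {v \<in> X. dm v = 0}"

lemma branching_space_eq_final_topology:
  "branching_space K X dm d \<epsilon> =
     final_topology (\<Union>\<alpha>\<in>vertices X dm. branch_set K X dm d \<epsilon> \<alpha>) (vertices X dm) (branch_top K X dm d \<epsilon>) (\<lambda>_. id)"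
  unfolding branching_space_def final_topology_def vertices_def topspace_branch_top
  by (simp add: Int_def conj_commute)

lemma topspace_branching_space:
  "topspace (branching_space K X dm d \<epsilon>) = (\<Union>\<alpha>\<in>vertices X dm. branch_set K X dm d \<epsilon> \<alpha>)"
  unfolding branching_space_eq_final_topology
  by (rule topspace_final_topology) (auto simp: topspace_branch_top)

lemma continuous_map_branch_top_branching_space:
  "\<alpha> \<in> vertices X dm \<Longrightarrow> continuous_map (branch_top K X dm d \<epsilon> \<alpha>) (branching_space K X dm d \<epsilon>) id"
  unfolding branching_space_eq_final_topology
  by (rule continuous_map_final_topology) (auto simp: topspace_branch_top)

lemma continuous_map_branching_space_mono:
  assumes "precubical K dm d" "precubical X dm d" "X \<subseteq> Y" "Y \<subseteq> K"
  shows "continuous_map (branching_space K X dm d \<epsilon>) (branching_space K Y dm d \<epsilon>) id"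
proof -
  have vertices: "vertices X dm \<subseteq> vertices Y dm"
    using assms(3) by (auto simp: vertices_def)
  then have "continuous_map (branch_top K X dm d \<epsilon> \<alpha>) (branching_space K Y dm d \<epsilon>) id"
    if "\<alpha> \<in> vertices X dm" for \<alpha>
    using continuous_map_compose[OF continuous_map_branch_top_mono[OF assms]
        continuous_map_branch_top_branching_space] that by auto
  moreover have "(\<Union>\<alpha>\<in>vertices X dm. branch_set K X dm d \<epsilon> \<alpha>) \<subseteq> topspace (branching_space K Y dm d \<epsilon>)"
    unfolding topspace_branching_space using vertices branch_set_mono[OF assms(3), of K dm d \<epsilon>] by blast
  ultimately show ?thesis
    unfolding branching_space_eq_final_topology[of K X]
    by (intro continuous_map_from_final_topology) (auto simp: topspace_branch_top)
qed

lemma colim_branching_eq_final_topology: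
  "colim_branching r X K dm d \<epsilon> \<nu> =
     final_topology (\<Union>\<mu>\<in>{\<mu>. ord_less r \<mu> \<nu>}. topspace (branching_space K (X \<mu>) dm d \<epsilon>))
       {\<mu>. ord_less r \<mu> \<nu>} (\<lambda>\<mu>. branching_space K (X \<mu>) dm d \<epsilon>) (\<lambda>_. id)"
  unfolding colim_branching_def final_topology_def by (simp add: Int_def conj_commute)

text \<open>The endpoints of the paths in the image of a simplex form a compact subset of \<open>|X|\<close>, so they
  lie in finitely many open cells; any subcomplex containing these cells carries all the paths.\<close>
lemma simplex_map_branch_top_finite_stage:
  assumes K: "precubical K dm d" and X: "precubical X dm d" and XK: "X \<subseteq> K" and \<epsilon>: "0 < \<epsilon>" "\<epsilon> < 1"
    and f: "continuous_map (simplex_top n) (branch_top K X dm d \<epsilon> \<alpha>) f"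
  obtains C where "finite C" "C \<subseteq> X"
    "\<And>Y. precubical Y dm d \<Longrightarrow> C \<subseteq> Y \<Longrightarrow> Y \<subseteq> X \<Longrightarrow>
       continuous_map (simplex_top n) (branch_top K Y dm d \<epsilon> \<alpha>) f"
proof -
  let ?I = "interval_top \<epsilon>"
  have f_co: "continuous_map (simplex_top n) (compact_open ?I (realization K X dm d)) f"
    and f_paths: "f \<in> topspace (simplex_top n) \<rightarrow> branch_set K X dm d \<epsilon> \<alpha>"
    using f unfolding continuous_map_simplex_branch_top by blast+
  define E where "E = (\<lambda>x. f x \<epsilon>) ` topspace (simplex_top n)"
  have "compact_space (simplex_top n)"
    unfolding simplex_top_def by (rule compact_space_subtopology[OF compactin_standard_simplex])
  moreover have "continuous_map (simplex_top n) (realization K X dm d) (\<lambda>x. f x \<epsilon>)"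
    by (rule continuous_map_compact_open_eval[OF f_co]) (use \<epsilon> in \<open>simp add: interval_top_def\<close>)
  ultimately have E: "compactin (realization K X dm d) E"
    unfolding E_def compact_space_def by (rule image_compactin)
  have "carrier_cell dm d ` E \<subseteq> X"
    using carrier_cell_in[OF K X] compactin_subset_topspace[OF E] by (auto simp: topspace_realization)
  moreover have "continuous_map (simplex_top n) (branch_top K Y dm d \<epsilon> \<alpha>) f"
    if Y: "precubical Y dm d" "carrier_cell dm d ` E \<subseteq> Y" "Y \<subseteq> X" for Y
  proof -
    have paths_Y: "f x \<in> branch_set K Y dm d \<epsilon> \<alpha>" if x: "x \<in> topspace (simplex_top n)" for x
      using branch_set_carrier[OF K X XK \<epsilon>] f_paths x Y(2) unfolding E_def by blast
    have "f x ` topspace ?I \<subseteq> geo_points K Y dm d" if "x \<in> topspace (simplex_top n)" for x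
      using continuous_map_image_subset_topspace[OF continuous_map_branch_path[OF paths_Y[OF that]]]
      by (simp add: topspace_realization)
    then have "continuous_map (simplex_top n)
        (compact_open ?I (subtopology (realization K X dm d) (geo_points K Y dm d))) f"
      by (rule continuous_map_compact_open_into_subtopology[OF f_co])
    then show ?thesis
      unfolding subtopology_realization[OF K Y(1,3) XK] continuous_map_simplex_branch_top
      using paths_Y by blast
  qed
  moreover have "finite (carrier_cell dm d ` E)"
    by (rule finite_carrier_cell_image[OF K E])
  ultimately show ?thesis using that by blast
qed

section \<open>The colimit at a limit stage\<close>

lemma topspace_colim_branching:
  "topspace (colim_branching r X K dm d \<epsilon> \<nu>) =
     (\<Union>\<mu>\<in>{\<mu>. ord_less r \<mu> \<nu>}. topspace (branching_space K (X \<mu>) dm d \<epsilon>))"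
  unfolding colim_branching_eq_final_topology by (rule topspace_final_topology) auto

lemma continuous_map_branching_space_colim_branching:
  "ord_less r \<mu> \<nu> \<Longrightarrow>
     continuous_map (branching_space K (X \<mu>) dm d \<epsilon>) (colim_branching r X K dm d \<epsilon> \<nu>) id"
  unfolding colim_branching_eq_final_topology by (rule continuous_map_final_topology) auto

lemma continuous_map_colim_branching_limit:
  assumes K: "precubical K dm d" and "X \<nu> \<subseteq> K"
    and below: "\<And>\<mu>. ord_less r \<mu> \<nu> \<Longrightarrow> precubical (X \<mu>) dm d \<and> X \<mu> \<subseteq> X \<nu>"
  shows "continuous_map (colim_branching r X K dm d \<epsilon> \<nu>) (branching_space K (X \<nu>) dm d \<epsilon>) id"
proof -
  have mono: "continuous_map (branching_space K (X \<mu>) dm d \<epsilon>) (branching_space K (X \<nu>) dm d \<epsilon>) id"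
    if "ord_less r \<mu> \<nu>" for \<mu>
    using below[OF that] \<open>X \<nu> \<subseteq> K\<close> by (intro continuous_map_branching_space_mono[OF K]) auto
  have "topspace (branching_space K (X \<mu>) dm d \<epsilon>) \<subseteq> topspace (branching_space K (X \<nu>) dm d \<epsilon>)"
    if "ord_less r \<mu> \<nu>" for \<mu>
    using continuous_map_image_subset_topspace[OF mono[OF that]] by simp
  then have "(\<Union>\<mu>\<in>{\<mu>. ord_less r \<mu> \<nu>}. topspace (branching_space K (X \<mu>) dm d \<epsilon>)) \<subseteq>
      topspace (branching_space K (X \<nu>) dm d \<epsilon>)"
    by blast
  then show ?thesis
    unfolding colim_branching_eq_final_topology
    by (intro continuous_map_from_final_topology) (use mono in auto)
qed

lemma branch_set_subset_topspace_colim_branching: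
  assumes below: "\<And>\<mu>. ord_less r \<mu> \<nu> \<Longrightarrow> precubical (X \<mu>) dm d"
    and cell_below: "\<And>c. c \<in> X \<nu> \<Longrightarrow> \<exists>\<mu>. ord_less r \<mu> \<nu> \<and> c \<in> X \<mu>"
  shows "branch_set K (X \<nu>) dm d \<epsilon> \<alpha> \<subseteq> topspace (colim_branching r X K dm d \<epsilon> \<nu>)"
proof
  fix p assume "p \<in> branch_set K (X \<nu>) dm d \<epsilon> \<alpha>"
  then obtain c \<phi> where p: "p = restrict (\<lambda>t. geo_pt K dm d c (\<phi> t)) {0..\<epsilon>}" and c: "c \<in> X \<nu>"
    "1 \<le> dm c" "init_vertex dm d c = \<alpha>" "\<phi> \<in> natural_paths (dm c) \<epsilon>"
    by (rule branch_setE)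
  obtain \<mu> where \<mu>: "ord_less r \<mu> \<nu>" "c \<in> X \<mu>"
    using cell_below[OF c(1)] by blast
  have "\<alpha> \<in> vertices (X \<mu>) dm"
    using init_vertex_in[OF below[OF \<mu>(1)] \<mu>(2)] c(3) by (auto simp: vertices_def)
  moreover have "p \<in> branch_set K (X \<mu>) dm d \<epsilon> \<alpha>"
    unfolding p using \<mu>(2) c(2-4) by (rule branch_setI)
  ultimately show "p \<in> topspace (colim_branching r X K dm d \<epsilon> \<nu>)"
    unfolding topspace_colim_branching topspace_branching_space using \<mu>(1) by blast
qed

lemma continuous_map_simplex_colim_branching:
  assumes K: "precubical K dm d" and \<epsilon>: "0 < \<epsilon>" "\<epsilon> < 1"
    and X\<nu>: "precubical (X \<nu>) dm d" "X \<nu> \<subseteq> K"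
    and below: "\<And>\<mu>. ord_less r \<mu> \<nu> \<Longrightarrow> precubical (X \<mu>) dm d \<and> X \<mu> \<subseteq> X \<nu>"
    and finite_below: "\<And>F. finite F \<Longrightarrow> F \<subseteq> X \<nu> \<Longrightarrow> \<exists>\<mu>. ord_less r \<mu> \<nu> \<and> F \<subseteq> X \<mu>"
    and \<alpha>: "\<alpha> \<in> vertices (X \<nu>) dm"
    and f: "continuous_map (simplex_top n) (branch_top K (X \<nu>) dm d \<epsilon> \<alpha>) f"
  shows "continuous_map (simplex_top n) (colim_branching r X K dm d \<epsilon> \<nu>) f"
proof -
  obtain C where C: "finite C" "C \<subseteq> X \<nu>" and stage: "\<And>Y. precubical Y dm d \<Longrightarrow> C \<subseteq> Y \<Longrightarrow> Y \<subseteq> X \<nu> \<Longrightarrow>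
      continuous_map (simplex_top n) (branch_top K Y dm d \<epsilon> \<alpha>) f"
    using simplex_map_branch_top_finite_stage[OF K X\<nu> \<epsilon> f] by blast
  obtain \<mu> where \<mu>: "ord_less r \<mu> \<nu>" "insert \<alpha> C \<subseteq> X \<mu>"
    using finite_below[of "insert \<alpha> C"] C \<alpha> by (auto simp: vertices_def)
  have "continuous_map (simplex_top n) (branch_top K (X \<mu>) dm d \<epsilon> \<alpha>) f"
    using stage below[OF \<mu>(1)] \<mu>(2) by blast
  moreover have "\<alpha> \<in> vertices (X \<mu>) dm"
    using \<alpha> \<mu>(2) by (auto simp: vertices_def)
  then have "continuous_map (branch_top K (X \<mu>) dm d \<epsilon> \<alpha>) (colim_branching r X K dm d \<epsilon> \<nu>) (id \<circ> id)"
    by (rule continuous_map_compose[OF continuous_map_branch_top_branching_space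
        continuous_map_branching_space_colim_branching[OF \<mu>(1)]])
  ultimately show ?thesis
    using continuous_map_compose by (metis id_comp)
qed

lemma continuous_map_from_branch_top:
  assumes "h \<in> branch_set K X dm d \<epsilon> \<alpha> \<rightarrow> topspace Z"
    and "\<And>n f. continuous_map (simplex_top n) (branch_top K X dm d \<epsilon> \<alpha>) f \<Longrightarrow>
      continuous_map (simplex_top n) Z (h \<circ> f)"
  shows "continuous_map (branch_top K X dm d \<epsilon> \<alpha>) Z h"
  using assms unfolding branch_top_def
  by (intro continuous_map_from_kdelta) (auto simp: continuous_map_simplex_kdelta)

lemma continuous_map_limit_colim_branching:
  assumes K: "precubical K dm d" and \<epsilon>: "0 < \<epsilon>" "\<epsilon> < 1"
    and X\<nu>: "precubical (X \<nu>) dm d" "X \<nu> \<subseteq> K"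
    and below: "\<And>\<mu>. ord_less r \<mu> \<nu> \<Longrightarrow> precubical (X \<mu>) dm d \<and> X \<mu> \<subseteq> X \<nu>"
    and finite_below: "\<And>F. finite F \<Longrightarrow> F \<subseteq> X \<nu> \<Longrightarrow> \<exists>\<mu>. ord_less r \<mu> \<nu> \<and> F \<subseteq> X \<mu>"
  shows "continuous_map (branching_space K (X \<nu>) dm d \<epsilon>) (colim_branching r X K dm d \<epsilon> \<nu>) id"
proof -
  let ?C = "colim_branching r X K dm d \<epsilon> \<nu>"
  have "\<exists>\<mu>. ord_less r \<mu> \<nu> \<and> c \<in> X \<mu>" if "c \<in> X \<nu>" for c
    using finite_below[of "{c}"] that by auto
  then have paths_C: "branch_set K (X \<nu>) dm d \<epsilon> \<alpha> \<subseteq> topspace ?C" for \<alpha>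
    using below by (intro branch_set_subset_topspace_colim_branching) auto
  have "continuous_map (branch_top K (X \<nu>) dm d \<epsilon> \<alpha>) ?C id" if "\<alpha> \<in> vertices (X \<nu>) dm" for \<alpha>
  proof (rule continuous_map_from_branch_top)
    show "id \<in> branch_set K (X \<nu>) dm d \<epsilon> \<alpha> \<rightarrow> topspace ?C"
      using paths_C[of \<alpha>] by auto
    fix n f assume "continuous_map (simplex_top n) (branch_top K (X \<nu>) dm d \<epsilon> \<alpha>) f"
    then show "continuous_map (simplex_top n) ?C (id \<circ> f)"
      using continuous_map_simplex_colim_branching[OF assms that] by simp
  qed
  moreover have "id \<in> (\<Union>\<alpha>\<in>vertices (X \<nu>) dm. branch_set K (X \<nu>) dm d \<epsilon> \<alpha>) \<rightarrow> topspace ?C"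
    using paths_C by (auto simp: Pi_iff)
  ultimately show ?thesis
    unfolding branching_space_eq_final_topology[of K "X \<nu>"]
    by (intro continuous_map_from_final_topology) (auto simp: topspace_branch_top)
qed

lemma homeomorphic_map_colim_branching:
  assumes "precubical K dm d" "0 < \<epsilon>" "\<epsilon> < 1" "precubical (X \<nu>) dm d" "X \<nu> \<subseteq> K"
    and "\<And>\<mu>. ord_less r \<mu> \<nu> \<Longrightarrow> precubical (X \<mu>) dm d \<and> X \<mu> \<subseteq> X \<nu>"
    and "\<And>F. finite F \<Longrightarrow> F \<subseteq> X \<nu> \<Longrightarrow> \<exists>\<mu>. ord_less r \<mu> \<nu> \<and> F \<subseteq> X \<mu>"
  shows "homeomorphic_map (colim_branching r X K dm d \<epsilon> \<nu>) (branching_space K (X \<nu>) dm d \<epsilon>) id"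
proof -
  have "continuous_map (colim_branching r X K dm d \<epsilon> \<nu>) (branching_space K (X \<nu>) dm d \<epsilon>) id"
    by (rule continuous_map_colim_branching_limit) (fact assms)+
  moreover have "continuous_map (branching_space K (X \<nu>) dm d \<epsilon>) (colim_branching r X K dm d \<epsilon> \<nu>) id"
    by (rule continuous_map_limit_colim_branching) (fact assms)+
  ultimately show ?thesis
    by (auto simp: homeomorphic_map_maps homeomorphic_maps_def)
qed

lemma precubical_UN:
  assumes "\<And>i. i \<in> I \<Longrightarrow> precubical (X i) dm d"
  shows "precubical (\<Union>i\<in>I. X i) dm d"
  using assms unfolding precubical_def by blast

lemma ord_less_Field: "ord_less r \<mu> \<nu> \<Longrightarrow> \<mu> \<in> Field r \<and> \<nu> \<in> Field r"
  unfolding ord_less_def by (auto intro: FieldI1 FieldI2)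

lemma cell_tower_mono: "cell_tower r X dm d \<Longrightarrow> ord_less r \<mu> \<nu> \<Longrightarrow> X \<mu> \<subseteq> X \<nu>"
  using ord_less_Field[of r \<mu> \<nu>] unfolding cell_tower_def by blast

lemma cell_tower_finite_subset_below:
  assumes T: "cell_tower r X dm d" and \<nu>: "\<nu> \<in> Field r" "is_limit r \<nu>"
  shows "finite F \<Longrightarrow> F \<subseteq> X \<nu> \<Longrightarrow> \<exists>\<mu>. ord_less r \<mu> \<nu> \<and> F \<subseteq> X \<mu>"
proof (induction F rule: finite_induct)
  case empty
  then show ?case using \<nu>(2) unfolding is_limit_def by blast
next
  case (insert a F)
  obtain \<mu>1 where \<mu>1: "ord_less r \<mu>1 \<nu>" "F \<subseteq> X \<mu>1" using insert by blast
  have "X \<nu> = (\<Union>\<mu>\<in>{\<mu>. ord_less r \<mu> \<nu>}. X \<mu>)" using T \<nu> unfolding cell_tower_def by blast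
  then obtain \<mu>2 where \<mu>2: "ord_less r \<mu>2 \<nu>" "a \<in> X \<mu>2" using insert.prems by blast
  have "total_on (Field r) r"
    using T unfolding cell_tower_def well_order_on_def linear_order_on_def by blast
  then have "\<mu>1 = \<mu>2 \<or> ord_less r \<mu>1 \<mu>2 \<or> ord_less r \<mu>2 \<mu>1"
    using ord_less_Field[OF \<mu>1(1)] ord_less_Field[OF \<mu>2(1)] unfolding total_on_def ord_less_def by blast
  then show ?case
    using \<mu>1 \<mu>2 cell_tower_mono[OF T] by blast
qed

theorem proposition5p4:
  fixes r :: "'i rel" and X :: "'i \<Rightarrow> 'c set" and dm :: "'c \<Rightarrow> nat"
    and d :: "nat \<Rightarrow> bool \<Rightarrow> 'c \<Rightarrow> 'c" and \<epsilon> :: real and \<nu> :: 'i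
  assumes "0 < \<epsilon>" and "\<epsilon> < 1"
    and "cell_tower r X dm d"
    and "\<nu> \<in> Field r" and "is_limit r \<nu>"
  shows "homeomorphic_map
           (colim_branching r X (\<Union>\<mu>\<in>Field r. X \<mu>) dm d \<epsilon> \<nu>)
           (branching_space (\<Union>\<mu>\<in>Field r. X \<mu>) (X \<nu>) dm d \<epsilon>) id"
proof (rule homeomorphic_map_colim_branching)
  have stages: "\<And>\<mu>. \<mu> \<in> Field r \<Longrightarrow> precubical (X \<mu>) dm d"
    using assms(3) unfolding cell_tower_def by blast
  then show "precubical (\<Union>\<mu>\<in>Field r. X \<mu>) dm d"
    by (rule precubical_UN)
  show "precubical (X \<nu>) dm d" "X \<nu> \<subseteq> (\<Union>\<mu>\<in>Field r. X \<mu>)"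
    using stages assms(4) by auto
  show "precubical (X \<mu>) dm d \<and> X \<mu> \<subseteq> X \<nu>" if "ord_less r \<mu> \<nu>" for \<mu>
    using stages ord_less_Field[OF that] cell_tower_mono[OF assms(3) that] by blast
  show "\<exists>\<mu>. ord_less r \<mu> \<nu> \<and> F \<subseteq> X \<mu>" if "finite F" "F \<subseteq> X \<nu>" for F
    using cell_tower_finite_subset_below[OF assms(3-5) that] .
qed (use assms(1,2) in auto)

end
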